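(* Let $\mu\in\mathbb{C}\setminus\{0\}$ and $\bm v=(v_1^{\mathrm T}\,\cdots\,v_N^{\mathrm T})^{\mathrm T}\in\mathbb{C}^{Nd}\setminus\{0\}$ satisfy $\mathcal N(\mu)\bm v=0$, and let $\bm q$ solve $\dot{\bm q}(s)=A(s,\mu)\bm q(s)$, $s\in[0,1]$, $\bm q(0)=\bm v$. Then \[ \frac{d\mathcal N(\mu)}{d\mu}\bm v=\bm q_\mu(1)-\bm v_N, \] where $\bm v_N=(0\,\cdots\,0\,v_1^{\mathrm T})^{\mathrm T}\in\mathbb{C}^{Nd}$ and $\bm q_\mu$ is the solution of \[ \dot{\bm q}_\mu(s)=\frac{\partial A(s,\mu)}{\partial\mu}\bm q(s)+A(s,\mu)\bm q_\mu(s),\quad s\in[0,1],\qquad \bm q_\mu(0)=0. \]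
   Context: Setting: $A_j:\mathbb{R}\to\mathbb{R}^{d\times d}$ ($j=0,\dots,h$) smooth and $T$-periodic, $T=N\Delta$ with $\Delta>0$, $N\in\mathbb{N}$, delays $\tau_j=n_j\Delta$ with integers $0=n_0\le n_1<\cdots<n_h$. For $\mu\neq0$ define the $Nd\times Nd$ matrix $A(s,\mu)$ by: for $\bm q=(q_1^{\mathrm T},\ldots,q_N^{\mathrm T})^{\mathrm T}$, the $n$-th $d$-block of $A(s,\mu)\bm q$ equals $\Delta\sum_{j=0}^h A_j((s+n-1)\Delta)\mu^{a_{n-n_j}}q_{b_{n-n_j}}$, with $a_k=\lfloor(k-1)/N\rfloor$, $b_k=((k-1)\bmod N)+1$. Let $B(\mu)=\begin{pmatrix}0&I_{N-1}\\ \mu&0\end{pmatrix}\otimes I_d$. The characteristic matrix $\mathcal N(\mu)$ is defined by $\mathcal N(\mu)\bm v=\bm q(1)-B(\mu)\bm v$, where $\bm q$ solves $\dot{\bm q}(s)=A(s,\mu)\bm q(s)$ on $[0,1]$, $\bm q(0)=\bm v$; it is analytic on $\mathbb{C}\setminus\{0\}$. *)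

theory Defs
  imports "HOL-Analysis.Analysis"
begin

(* A vector bold-q in C^{Nd} is represented as  q :: nat => nat => complex,
   q n i = i-th component (i < d) of the n-th d-block (n in {1..N}).
   Values outside this index range are irrelevant.
   An Nd x Nd matrix is M :: nat => nat => nat => nat => complex,
   M n i m k = entry in row (block n, comp i), column (block m, comp k).
   The coefficient functions A_j are  Aj j :: real => nat => nat => real,
   Aj j t i k = (i,k) entry of A_j(t), for i,k < d.
   Delays tau_j = nd j * Delta. *)

type_synonym bvec = "nat \<Rightarrow> nat \<Rightarrow> complex"
type_synonym bmat = "nat \<Rightarrow> nat \<Rightarrow> nat \<Rightarrow> nat \<Rightarrow> complex"

definition smooth_fun :: "(real \<Rightarrow> real) \<Rightarrow> bool" where
  "smooth_fun f \<longleftrightarrow> (\<forall>k x. ((deriv ^^ k) f) differentiable (at x))"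

text \<open>a_k = floor((k-1)/N) (int div is floor division), b_k = ((k-1) mod N) + 1\<close>
definition aidx :: "nat \<Rightarrow> int \<Rightarrow> int" where
  "aidx N k = (k - 1) div int N"

definition bidx :: "nat \<Rightarrow> int \<Rightarrow> nat" where
  "bidx N k = nat ((k - 1) mod int N + 1)"

definition Amat :: "nat \<Rightarrow> real \<Rightarrow> nat \<Rightarrow> (nat \<Rightarrow> nat)
    \<Rightarrow> (nat \<Rightarrow> real \<Rightarrow> nat \<Rightarrow> nat \<Rightarrow> real) \<Rightarrow> real \<Rightarrow> complex \<Rightarrow> bmat" where
  "Amat N \<Delta> h nd Aj s \<mu> n i m k =
     complex_of_real \<Delta> * (\<Sum>j\<le>h.
        if bidx N (int n - int (nd j)) = m
        then complex_of_real (Aj j ((s + real n - 1) * \<Delta>) i k) * \<mu> powi aidx N (int n - int (nd j))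
        else 0)"

definition mat_app :: "nat \<Rightarrow> nat \<Rightarrow> bmat \<Rightarrow> bvec \<Rightarrow> bvec" where
  "mat_app d N M q = (\<lambda>n i. \<Sum>m\<in>{1..N}. \<Sum>k<d. M n i m k * q m k)"

text \<open>Action of B(mu) = [[0, I_{N-1}],[mu, 0]] (x) I_d.\<close>
definition Bapp :: "nat \<Rightarrow> complex \<Rightarrow> bvec \<Rightarrow> bvec" where
  "Bapp N \<mu> v = (\<lambda>n i. if n < N then v (n + 1) i else \<mu> * v 1 i)"

definition ivp_sol :: "nat \<Rightarrow> nat \<Rightarrow> (real \<Rightarrow> bvec \<Rightarrow> bvec) \<Rightarrow> bvec \<Rightarrow> (real \<Rightarrow> bvec) \<Rightarrow> bool" where
  "ivp_sol d N F v q \<longleftrightarrow>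
     (\<forall>n\<in>{1..N}. \<forall>i<d. q 0 n i = v n i \<and>
        (\<forall>s\<in>{0..1}. ((\<lambda>t. q t n i) has_vector_derivative F s (q s) n i) (at s within {0..1})))"

text \<open>N(mu) v = q(1) - B(mu) v, with q the (unique) solution of q' = A(s,mu) q, q(0)=v;
  the solution is normalised to 0 outside [0,1] and outside the index range.\<close>
definition char_app :: "nat \<Rightarrow> nat \<Rightarrow> real \<Rightarrow> nat \<Rightarrow> (nat \<Rightarrow> nat)
    \<Rightarrow> (nat \<Rightarrow> real \<Rightarrow> nat \<Rightarrow> nat \<Rightarrow> real) \<Rightarrow> complex \<Rightarrow> bvec \<Rightarrow> bvec" where
  "char_app d N \<Delta> h nd Aj \<mu> v = (\<lambda>n i.
     (THE q. ivp_sol d N (\<lambda>s x. mat_app d N (Amat N \<Delta> h nd Aj s \<mu>) x) v q \<and>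
        (\<forall>s n i. (s \<notin> {0..1} \<or> n \<notin> {1..N} \<or> d \<le> i) \<longrightarrow> q s n i = 0)) 1 n i
     - Bapp N \<mu> v n i)"

definition char_mat :: "nat \<Rightarrow> nat \<Rightarrow> real \<Rightarrow> nat \<Rightarrow> (nat \<Rightarrow> nat)
    \<Rightarrow> (nat \<Rightarrow> real \<Rightarrow> nat \<Rightarrow> nat \<Rightarrow> real) \<Rightarrow> complex \<Rightarrow> bmat" where
  "char_mat d N \<Delta> h nd Aj \<mu> n i m k =
     char_app d N \<Delta> h nd Aj \<mu> (\<lambda>m' k'. if m' = m \<and> k' = k then 1 else 0) n i"

definition vN :: "nat \<Rightarrow> bvec \<Rightarrow> bvec" where
  "vN N v = (\<lambda>n i. if n = N then v 1 i else 0)"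

end

theory Submission
  imports Defs
begin

(* N(mu) v = S_mu v (1) - B(mu) v, where S_mu v solves the linear system q' = A(s,mu) q, q(0) = v,
   whose entries are Laurent polynomials in mu with coefficients continuous in s. Picard iteration
   gives existence and Gronwall's inequality uniqueness, so the solution in the definition of N(mu)
   is well defined and linear in v, i.e. N(mu) acts by matrix multiplication. If P solves the
   variational equation, the remainder q_z - q_mu - (z - mu) P solves a linear system whose forcing
   is o(|z - mu|) uniformly on [0,1], so by Gronwall it is o(|z - mu|) at s = 1; differentiating
   B(mu) v contributes v_N. *)

section \<open>Block vectors and block matrices\<close>

definition bnorm :: "nat \<Rightarrow> nat \<Rightarrow> bvec \<Rightarrow> real" where
  "bnorm d N x = (\<Sum>m\<in>{1..N}. \<Sum>k<d. norm (x m k))"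

lemma bnorm_nonneg: "0 \<le> bnorm d N x"
  unfolding bnorm_def by (intro sum_nonneg) auto

lemma norm_le_bnorm:
  assumes "n \<in> {1..N}" "i < d"
  shows "norm (x n i) \<le> bnorm d N x"
proof -
  have "norm (x n i) \<le> (\<Sum>k<d. norm (x n k))"
    using assms by (intro member_le_sum) auto
  also have "\<dots> \<le> bnorm d N x" unfolding bnorm_def
    using assms by (intro member_le_sum[where f="\<lambda>m. \<Sum>k<d. norm (x m k)"] sum_nonneg) auto
  finally show ?thesis .
qed

lemma bnorm_le_const:
  assumes "\<forall>n\<in>{1..N}. \<forall>i<d. norm (x n i) \<le> b"
  shows "bnorm d N x \<le> real N * real d * b"
proof -
  have "bnorm d N x \<le> (\<Sum>m\<in>{1..N}. \<Sum>k<d. b)" unfolding bnorm_def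
    using assms by (intro sum_mono) auto
  also have "\<dots> = real N * real d * b" by (simp add: mult.assoc)
  finally show ?thesis .
qed

lemma continuous_on_bnorm:
  assumes "\<forall>n\<in>{1..N}. \<forall>i<d. continuous_on S (\<lambda>s. x s n i)"
  shows "continuous_on S (\<lambda>s. bnorm d N (x s))"
  unfolding bnorm_def using assms by (intro continuous_intros) auto

lemma norm_mat_app_le:
  assumes "\<forall>m\<in>{1..N}. \<forall>k<d. norm (M n i m k) \<le> B"
  shows "norm (mat_app d N M x n i) \<le> B * bnorm d N x"
proof -
  have "norm (mat_app d N M x n i) \<le> (\<Sum>m\<in>{1..N}. \<Sum>k<d. norm (M n i m k * x m k))"
    unfolding mat_app_def by (intro order_trans[OF norm_sum] sum_mono norm_sum)
  also have "\<dots> \<le> (\<Sum>m\<in>{1..N}. \<Sum>k<d. B * norm (x m k))"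
    using assms by (intro sum_mono) (auto simp: norm_mult intro!: mult_right_mono)
  also have "\<dots> = B * bnorm d N x"
    unfolding bnorm_def by (simp add: sum_distrib_left)
  finally show ?thesis .
qed

lemma mat_app_cong:
  assumes "\<forall>m\<in>{1..N}. \<forall>k<d. x m k = y m k"
  shows "mat_app d N M x n i = mat_app d N M y n i"
  unfolding mat_app_def using assms by (intro sum.cong) auto

lemma mat_app_diff:
  "mat_app d N M x n i - mat_app d N M y n i = mat_app d N M (\<lambda>m k. x m k - y m k) n i"
  unfolding mat_app_def by (simp add: sum_subtractf right_diff_distrib)

lemma mat_app_sum:
  "(\<Sum>m\<in>{1..N}. \<Sum>k<d. mat_app d N M (X m k) n i * c m k)
     = mat_app d N M (\<lambda>m' k'. \<Sum>m\<in>{1..N}. \<Sum>k<d. X m k m' k' * c m k) n i"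
proof -
  let ?I = "{1..N} \<times> {..<d}"
  have "(\<Sum>m\<in>{1..N}. \<Sum>k<d. mat_app d N M (X m k) n i * c m k)
      = (\<Sum>(m,k)\<in>?I. \<Sum>(m',k')\<in>?I. M n i m' k' * X m k m' k' * c m k)"
    unfolding mat_app_def sum.cartesian_product by (simp add: sum_distrib_right case_prod_unfold)
  also have "\<dots> = (\<Sum>(m',k')\<in>?I. \<Sum>(m,k)\<in>?I. M n i m' k' * X m k m' k' * c m k)"
    unfolding case_prod_unfold by (rule sum.swap)
  also have "\<dots> = mat_app d N M (\<lambda>m' k'. \<Sum>m\<in>{1..N}. \<Sum>k<d. X m k m' k' * c m k) n i"
    unfolding mat_app_def sum.cartesian_product by (simp add: sum_distrib_left mult.assoc case_prod_unfold)
  finally show ?thesis .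
qed

lemma continuous_on_mat_app:
  assumes "\<forall>m\<in>{1..N}. \<forall>k<d. continuous_on S (\<lambda>s. M s n i m k)"
    and "\<forall>m\<in>{1..N}. \<forall>k<d. continuous_on S (\<lambda>s. x s m k)"
  shows "continuous_on S (\<lambda>s. mat_app d N (M s) (x s) n i)"
  unfolding mat_app_def using assms by (intro continuous_intros) auto

lemma uniform_limit_mat_app:
  assumes B: "\<forall>s\<in>S. \<forall>m\<in>{1..N}. \<forall>k<d. norm (M s n i m k) \<le> B"
    and lim: "\<forall>m\<in>{1..N}. \<forall>k<d. uniform_limit S (\<lambda>p s. x p s m k) (\<lambda>s. y s m k) F"
  shows "uniform_limit S (\<lambda>p s. mat_app d N (M s) (x p s) n i) (\<lambda>s. mat_app d N (M s) (y s) n i) F"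
proof (rule uniform_limitI)
  fix e :: real assume e: "e > 0"
  define L where "L = \<bar>B\<bar> * real N * real d + 1"
  have L: "L > 0" by (simp add: L_def add_nonneg_pos)
  have "\<forall>\<^sub>F p in F. \<forall>t\<in>{1..N} \<times> {..<d}. \<forall>s\<in>S. dist (x p s (fst t) (snd t)) (y s (fst t) (snd t)) < e / L"
    using lim e L by (intro eventually_ball_finite) (auto intro!: uniform_limitD)
  then show "\<forall>\<^sub>F p in F. \<forall>s\<in>S. dist (mat_app d N (M s) (x p s) n i) (mat_app d N (M s) (y s) n i) < e"
  proof eventually_elim
    case (elim p)
    show ?case
    proof
      fix s assume s: "s \<in> S"
      have "bnorm d N (\<lambda>m k. x p s m k - y s m k) \<le> real N * real d * (e / L)"
        using elim s by (intro bnorm_le_const) (force simp: dist_norm)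
      then have "norm (mat_app d N (M s) (\<lambda>m k. x p s m k - y s m k) n i) \<le> \<bar>B\<bar> * (real N * real d * (e / L))"
        using B s by (intro order_trans[OF norm_mat_app_le] mult_mono bnorm_nonneg) auto
      also have "\<dots> < e" using e L by (simp add: L_def field_simps)
      finally show "dist (mat_app d N (M s) (x p s) n i) (mat_app d N (M s) (y s) n i) < e"
        by (simp add: dist_norm mat_app_diff)
    qed
  qed
qed

lemma finite_family_bounded:
  fixes f :: "'a \<Rightarrow> 'b::topological_space \<Rightarrow> 'c::real_normed_vector"
  assumes "finite T" "compact S" "\<And>t. t \<in> T \<Longrightarrow> continuous_on S (f t)"
  shows "\<exists>B\<ge>0. \<forall>t\<in>T. \<forall>s\<in>S. norm (f t s) \<le> B"
  using assms(1,3)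
proof (induction T rule: finite_induct)
  case empty then show ?case by auto
next
  case (insert t T)
  obtain B1 where B1: "B1 \<ge> 0" "\<forall>t\<in>T. \<forall>s\<in>S. norm (f t s) \<le> B1" using insert by blast
  have "bounded (f t ` S)"
    using insert.prems by (intro compact_imp_bounded compact_continuous_image assms(2)) auto
  then obtain B2 where B2: "\<forall>s\<in>S. norm (f t s) \<le> B2" by (auto simp: bounded_iff)
  show ?case
    by (rule exI[of _ "max B1 B2"]) (use B1 B2 in \<open>auto simp: le_max_iff_disj\<close>)
qed

definition bmat_continuous :: "nat \<Rightarrow> nat \<Rightarrow> (real \<Rightarrow> bmat) \<Rightarrow> bool" where
  "bmat_continuous d N M \<longleftrightarrow>
     (\<forall>n\<in>{1..N}. \<forall>i<d. \<forall>m\<in>{1..N}. \<forall>k<d. continuous_on {0..1} (\<lambda>s. M s n i m k))"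

lemma bmat_continuous_bounded:
  assumes "bmat_continuous d N M"
  shows "\<exists>B\<ge>0. \<forall>s\<in>{0..1}. \<forall>n\<in>{1..N}. \<forall>i<d. \<forall>m\<in>{1..N}. \<forall>k<d. norm (M s n i m k) \<le> B"
proof -
  obtain B where "B \<ge> 0" and B: "\<forall>t\<in>{1..N} \<times> {..<d} \<times> {1..N} \<times> {..<d}. \<forall>s\<in>{0..1}.
      norm ((\<lambda>(n,i,m,k) s. M s n i m k) t s) \<le> B"
    using assms unfolding bmat_continuous_def
    by (atomize_elim, intro finite_family_bounded) auto
  show ?thesis
  proof (intro exI[of _ B] conjI ballI allI impI)
    fix s :: real and n i m k
    assume "s \<in> {0..1}" "n \<in> {1..N}" "i < d" "m \<in> {1..N}" "k < d"
    then show "norm (M s n i m k) \<le> B" using B[rule_format, of "(n, i, m, k)" s] by auto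
  qed (rule \<open>B \<ge> 0\<close>)
qed

lemma bvec_continuous_bounded:
  fixes x :: "real \<Rightarrow> bvec"
  assumes "\<forall>n\<in>{1..N}. \<forall>i<d. continuous_on {0..1} (\<lambda>s. x s n i)"
  shows "\<exists>K\<ge>0. \<forall>s\<in>{0..1}. bnorm d N (x s) \<le> K"
proof -
  have "bounded ((\<lambda>s. bnorm d N (x s)) ` {0..1})"
    using continuous_on_bnorm[OF assms] by (intro compact_imp_bounded compact_continuous_image) auto
  then obtain K where "K > 0" "\<forall>s\<in>{0..1}. \<bar>bnorm d N (x s)\<bar> \<le> K" by (auto simp: bounded_pos)
  then show ?thesis by (auto dest: abs_le_D1 intro!: exI[of _ K])
qed

section \<open>Gronwall's inequality\<close>

lemma norm_le_of_vector_derivative_le: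
  fixes f f' :: "real \<Rightarrow> 'a::real_normed_vector" and \<phi> \<phi>' :: "real \<Rightarrow> real"
  assumes "f 0 = 0" "0 \<le> \<phi> 0"
    and f': "\<And>s. s \<in> {0..1} \<Longrightarrow> (f has_vector_derivative f' s) (at s within {0..1})"
    and \<phi>': "\<And>s. (\<phi> has_real_derivative \<phi>' s) (at s)"
    and f'_le: "\<And>s. s \<in> {0..1} \<Longrightarrow> norm (f' s) \<le> \<phi>' s"
    and s: "s \<in> {0..1}"
  shows "norm (f s) \<le> \<phi> s"
proof (cases "s = 0")
  case False
  then have s: "0 < s" "s \<le> 1" using s by auto
  have "norm (f s - f 0) \<le> \<phi> s - \<phi> 0"
  proof (rule differentiable_bound_general[OF s(1)])
    have "continuous_on {0..1} f"
      using f' by (rule continuous_on_vector_derivative)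
    then show "continuous_on {0..s} f"
      by (rule continuous_on_subset) (use s in auto)
    show "continuous_on {0..s} \<phi>"
      by (intro continuous_at_imp_continuous_on ballI DERIV_isCont[OF \<phi>'])
    fix t assume t: "0 < t" "t < s"
    then have "at t within {0..1} = at t"
      using s by (intro at_within_interior) (simp add: interior_atLeastAtMost_real)
    then show "(f has_vector_derivative f' t) (at t)"
      using f'[of t] t s by simp
    show "(\<phi> has_vector_derivative \<phi>' t) (at t)"
      using \<phi>' has_real_derivative_iff_has_vector_derivative by blast
    show "norm (f' t) \<le> \<phi>' t" using f'_le t s by simp
  qed
  then show ?thesis using assms(1,2) by simp
qed (use assms(1,2) in simp)

text \<open>One integration of \<open>|X'| \<le> L |Y| + \<epsilon>\<close> carries this majorant of \<open>Y\<close> from \<open>p\<close> to \<open>p + 1\<close>;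
  its limit \<open>p \<rightarrow> \<infinity>\<close> is the Gronwall bound.\<close>
definition gronwall_majorant :: "real \<Rightarrow> real \<Rightarrow> real \<Rightarrow> nat \<Rightarrow> real \<Rightarrow> real" where
  "gronwall_majorant K \<epsilon> L p s = K * (L * s) ^ p / fact p + \<epsilon> / L * (exp (L * s) - 1)"

lemma gronwall_majorant_nonneg:
  "K \<ge> 0 \<Longrightarrow> \<epsilon> \<ge> 0 \<Longrightarrow> L > 0 \<Longrightarrow> s \<ge> 0 \<Longrightarrow> gronwall_majorant K \<epsilon> L p s \<ge> 0"
  unfolding gronwall_majorant_def by (auto intro!: add_nonneg_nonneg divide_nonneg_nonneg mult_nonneg_nonneg)

lemma gronwall_majorant_has_derivative:
  assumes "L > 0"
  shows "(gronwall_majorant K \<epsilon> L (Suc p) has_real_derivative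
           L * gronwall_majorant K \<epsilon> L p s + \<epsilon>) (at s)"
proof -
  have "K * (real (Suc p) * (L * s) ^ p * L) / fact (Suc p) = L * (K * (L * s) ^ p / fact p)"
    by (simp del: of_nat_Suc)
  moreover have "\<epsilon> / L * (exp (L * s) * L) = L * (\<epsilon> / L * (exp (L * s) - 1)) + \<epsilon>"
    using assms by (simp add: field_simps)
  ultimately have "K * (real (Suc p) * (L * s) ^ p * L) / fact (Suc p) + \<epsilon> / L * (exp (L * s) * L)
      = L * gronwall_majorant K \<epsilon> L p s + \<epsilon>"
    unfolding gronwall_majorant_def by (simp only: distrib_left add.assoc)
  moreover have "(gronwall_majorant K \<epsilon> L (Suc p) has_real_derivative
     K * (real (Suc p) * (L * s) ^ p * L) / fact (Suc p) + \<epsilon> / L * (exp (L * s) * L)) (at s)"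
    unfolding gronwall_majorant_def
    by (auto intro!: derivative_eq_intros simp del: fact_Suc power_Suc)
  ultimately show ?thesis by simp
qed

lemma gronwall_majorant_limit:
  "(\<lambda>p. gronwall_majorant K \<epsilon> L p s) \<longlonglongrightarrow> \<epsilon> / L * (exp (L * s) - 1)"
proof -
  have "(\<lambda>p. (L * s) ^ p / fact p) \<longlonglongrightarrow> 0"
    using summable_LIMSEQ_zero[OF summable_exp[of "L * s"]] by (simp add: inverse_eq_divide)
  from tendsto_add[OF tendsto_mult_right_zero[OF this, of K] tendsto_const]
  show ?thesis unfolding gronwall_majorant_def by (simp add: times_divide_eq_right)
qed
lemma gronwall_majorant_0_le:
  assumes "K \<ge> 0" "L \<ge> 0" "s \<in> {0..1}"
  shows "gronwall_majorant K 0 L p s \<le> K * L ^ p / fact p"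
proof -
  have "(L * s) ^ p \<le> L ^ p"
    using assms(2,3) by (intro power_mono) (auto simp: mult_left_le)
  then show ?thesis
    unfolding gronwall_majorant_def using assms(1) by (simp add: divide_right_mono mult_left_mono)
qed

lemma gronwall_majorant_step:
  fixes X X' Y :: "real \<Rightarrow> bvec"
  assumes "B \<ge> 0" "\<epsilon> \<ge> 0" "K \<ge> 0" and L: "L = B * real N * real d + 1"
    and X0: "\<forall>n\<in>{1..N}. \<forall>i<d. X 0 n i = 0"
    and X': "\<forall>s\<in>{0..1}. \<forall>n\<in>{1..N}. \<forall>i<d.
               ((\<lambda>t. X t n i) has_vector_derivative X' s n i) (at s within {0..1})"
    and X'_le: "\<forall>s\<in>{0..1}. \<forall>n\<in>{1..N}. \<forall>i<d. norm (X' s n i) \<le> B * bnorm d N (Y s) + \<epsilon>"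
    and Y_le: "\<forall>s\<in>{0..1}. \<forall>n\<in>{1..N}. \<forall>i<d. norm (Y s n i) \<le> gronwall_majorant K \<epsilon> L p s"
  shows "\<forall>s\<in>{0..1}. \<forall>n\<in>{1..N}. \<forall>i<d. norm (X s n i) \<le> gronwall_majorant K \<epsilon> L (Suc p) s"
proof (intro ballI allI impI)
  fix s :: real and n i assume s: "s \<in> {0..1}" and n: "n \<in> {1..N}" and i: "i < d"
  have "L > 0" using L \<open>B \<ge> 0\<close> by (simp add: add_nonneg_pos)
  show "norm (X s n i) \<le> gronwall_majorant K \<epsilon> L (Suc p) s"
  proof (rule norm_le_of_vector_derivative_le[where f="\<lambda>t. X t n i" and f'="\<lambda>t. X' t n i",
        OF _ _ _ gronwall_majorant_has_derivative[OF \<open>L > 0\<close>] _ s])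
    fix t :: real assume t: "t \<in> {0..1}"
    show "((\<lambda>t. X t n i) has_vector_derivative X' t n i) (at t within {0..1})"
      using X' t n i by blast
    have "B * bnorm d N (Y t) \<le> B * (real N * real d * gronwall_majorant K \<epsilon> L p t)"
      using Y_le t \<open>B \<ge> 0\<close> by (intro mult_left_mono bnorm_le_const) auto
    also have "\<dots> \<le> L * gronwall_majorant K \<epsilon> L p t"
      using gronwall_majorant_nonneg[of K \<epsilon> L t p] assms(2,3) \<open>L > 0\<close> t
      by (simp only: L distrib_right mult_1_left mult.assoc) auto
    moreover have "norm (X' t n i) \<le> B * bnorm d N (Y t) + \<epsilon>"
      using X'_le t n i by blast
    ultimately show "norm (X' t n i) \<le> L * gronwall_majorant K \<epsilon> L p t + \<epsilon>"
      by linarith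
  qed (use X0 n i in \<open>simp_all add: gronwall_majorant_def\<close>)
qed

lemma gronwall_majorant_iterate:
  fixes D D' :: "nat \<Rightarrow> real \<Rightarrow> bvec"
  assumes "B \<ge> 0" "\<epsilon> \<ge> 0" "K \<ge> 0" and L: "L = B * real N * real d + 1"
    and D0: "\<forall>s\<in>{0..1}. bnorm d N (D 0 s) \<le> K"
    and init: "\<And>p. \<forall>n\<in>{1..N}. \<forall>i<d. D (Suc p) 0 n i = 0"
    and D': "\<And>p. \<forall>s\<in>{0..1}. \<forall>n\<in>{1..N}. \<forall>i<d.
               ((\<lambda>t. D (Suc p) t n i) has_vector_derivative D' p s n i) (at s within {0..1})"
    and D'_le: "\<And>p. \<forall>s\<in>{0..1}. \<forall>n\<in>{1..N}. \<forall>i<d. norm (D' p s n i) \<le> B * bnorm d N (D p s) + \<epsilon>"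
  shows "\<forall>s\<in>{0..1}. \<forall>n\<in>{1..N}. \<forall>i<d. norm (D p s n i) \<le> gronwall_majorant K \<epsilon> L p s"
proof (induction p)
  case 0
  show ?case
  proof (intro ballI allI impI)
    fix s :: real and n i assume "s \<in> {0..1}" "n \<in> {1..N}" "i < d"
    then have "norm (D 0 s n i) \<le> K" using norm_le_bnorm[of n N i d "D 0 s"] D0 by force
    moreover have "0 \<le> \<epsilon> / L * (exp (L * s) - 1)"
      using \<open>s \<in> {0..1}\<close> \<open>\<epsilon> \<ge> 0\<close> \<open>B \<ge> 0\<close> L by auto
    ultimately show "norm (D 0 s n i) \<le> gronwall_majorant K \<epsilon> L 0 s"
      by (simp add: gronwall_majorant_def)
  qed
next
  case (Suc p)
  show ?case by (rule gronwall_majorant_step[OF assms(1-4) init D' D'_le Suc])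
qed

lemma gronwall:
  fixes R R' :: "real \<Rightarrow> bvec"
  assumes "B \<ge> 0" "\<epsilon> \<ge> 0"
    and R0: "\<forall>n\<in>{1..N}. \<forall>i<d. R 0 n i = 0"
    and R': "\<forall>s\<in>{0..1}. \<forall>n\<in>{1..N}. \<forall>i<d.
               ((\<lambda>t. R t n i) has_vector_derivative R' s n i) (at s within {0..1})"
    and R'_le: "\<forall>s\<in>{0..1}. \<forall>n\<in>{1..N}. \<forall>i<d. norm (R' s n i) \<le> B * bnorm d N (R s) + \<epsilon>"
    and s: "s \<in> {0..1}" and n: "n \<in> {1..N}" and i: "i < d"
  shows "norm (R s n i) \<le> \<epsilon> * exp (B * real N * real d + 1)"
proof -
  define L where "L = B * real N * real d + 1"
  have "L \<ge> 1" using \<open>B \<ge> 0\<close> by (simp add: L_def)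
  have "\<forall>n\<in>{1..N}. \<forall>i<d. continuous_on {0..1} (\<lambda>s. R s n i)"
    using R' by (auto intro!: continuous_on_vector_derivative)
  then obtain K where "K \<ge> 0" and K: "\<forall>s\<in>{0..1}. bnorm d N (R s) \<le> K"
    using bvec_continuous_bounded by blast
  have "\<forall>s\<in>{0..1}. \<forall>n\<in>{1..N}. \<forall>i<d. norm (R s n i) \<le> gronwall_majorant K \<epsilon> L p s" for p
    using gronwall_majorant_iterate[where D="\<lambda>_. R" and D'="\<lambda>_. R'", OF assms(1,2) \<open>K \<ge> 0\<close> L_def K R0 R' R'_le] .
  then have "norm (R s n i) \<le> \<epsilon> / L * (exp (L * s) - 1)"
    using s n i
    by (intro tendsto_le[OF trivial_limit_sequentially gronwall_majorant_limit tendsto_const]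
        always_eventually) blast
  also have "\<dots> \<le> \<epsilon> * exp L"
  proof (rule mult_mono)
    show "\<epsilon> / L \<le> \<epsilon>" using \<open>\<epsilon> \<ge> 0\<close> \<open>L \<ge> 1\<close> by (simp add: divide_le_eq mult_le_cancel_left1)
    have "L * s \<le> L" using s \<open>L \<ge> 1\<close> by (simp add: mult_le_cancel_left1)
    then have "exp (L * s) \<le> exp L" by simp
    then show "exp (L * s) - 1 \<le> exp L" by linarith
    show "0 \<le> \<epsilon>" by fact
    show "0 \<le> exp (L * s) - 1" using s \<open>L \<ge> 1\<close> by simp
  qed
  finally show ?thesis by (simp add: L_def)
qed

section \<open>Linear initial value problems\<close>

lemma has_vector_derivative_uniform_limit:
  fixes f f' :: "nat \<Rightarrow> real \<Rightarrow> 'a::banach"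
  assumes "convex S" "s \<in> S"
    and f': "\<And>p t. t \<in> S \<Longrightarrow> (f p has_vector_derivative f' p t) (at t within S)"
    and lim_f: "\<And>t. t \<in> S \<Longrightarrow> (\<lambda>p. f p t) \<longlonglongrightarrow> g t"
    and lim_f': "uniform_limit S f' g' sequentially"
  shows "(g has_vector_derivative g' s) (at s within S)"
proof -
  have "\<exists>G. \<forall>t\<in>S. (\<lambda>p. f p t) \<longlonglongrightarrow> G t \<and> (G has_derivative (\<lambda>h. h *\<^sub>R g' t)) (at t within S)"
  proof (rule has_derivative_sequence[where f=f and f'="\<lambda>p t h. h *\<^sub>R f' p t", OF _ _ _ \<open>s \<in> S\<close>])
    show "convex S" by fact
    show "(\<lambda>p. f p s) \<longlonglongrightarrow> g s" using lim_f \<open>s \<in> S\<close> .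
    show "(f p has_derivative (\<lambda>h. h *\<^sub>R f' p t)) (at t within S)" if "t \<in> S" for p t
      using f'[OF that] unfolding has_vector_derivative_def .
    fix e :: real assume "e > 0"
    from uniform_limitD[OF lim_f' this]
    show "\<forall>\<^sub>F p in sequentially. \<forall>t\<in>S. \<forall>h. norm (h *\<^sub>R f' p t - h *\<^sub>R g' t) \<le> e * norm h"
    proof (rule eventually_mono, intro ballI allI)
      fix p t h assume "\<forall>t\<in>S. dist (f' p t) (g' t) < e" "t \<in> S"
      then have "norm (f' p t - g' t) \<le> e" by (simp add: dist_norm less_imp_le)
      then show "norm (h *\<^sub>R f' p t - h *\<^sub>R g' t) \<le> e * norm h"
        by (simp add: scaleR_diff_right[symmetric] mult.commute[of e] mult_left_mono)
    qed
  qed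
  then obtain G where G: "\<And>t. t \<in> S \<Longrightarrow> (\<lambda>p. f p t) \<longlonglongrightarrow> G t"
    and G': "(G has_derivative (\<lambda>h. h *\<^sub>R g' s)) (at s within S)"
    using \<open>s \<in> S\<close> by blast
  have "g t = G t" if "t \<in> S" for t
    using LIMSEQ_unique[OF lim_f[OF that] G[OF that]] .
  then have "(g has_derivative (\<lambda>h. h *\<^sub>R g' s)) (at s within S)"
    by (rule has_derivative_transform[OF \<open>s \<in> S\<close> _ G'])
  then show ?thesis unfolding has_vector_derivative_def .
qed

lemma ivp_sol_continuous:
  fixes x :: "real \<Rightarrow> bvec"
  assumes "ivp_sol d N F v x" "n \<in> {1..N}" "i < d"
  shows "continuous_on {0..1} (\<lambda>s. x s n i)"
  using assms unfolding ivp_sol_def by (intro continuous_on_vector_derivative) blast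

lemma ivp_sol_bnorm_bounded:
  fixes x :: "real \<Rightarrow> bvec"
  assumes "ivp_sol d N F v x"
  shows "\<exists>K\<ge>0. \<forall>s\<in>{0..1}. bnorm d N (x s) \<le> K"
  using assms by (intro bvec_continuous_bounded ballI allI impI ivp_sol_continuous) auto

lemma ivp_sol_cong_field:
  assumes "ivp_sol d N F v x" "\<forall>s\<in>{0..1}. \<forall>y. \<forall>n\<in>{1..N}. \<forall>i<d. F s y n i = G s y n i"
  shows "ivp_sol d N G v x"
  using assms unfolding ivp_sol_def by auto

definition linear_field :: "nat \<Rightarrow> nat \<Rightarrow> (real \<Rightarrow> bmat) \<Rightarrow> (real \<Rightarrow> bvec) \<Rightarrow> real \<Rightarrow> bvec \<Rightarrow> bvec" where
  "linear_field d N M g = (\<lambda>s x n i. mat_app d N (M s) x n i + g s n i)"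

primrec picard_iter ::
    "nat \<Rightarrow> nat \<Rightarrow> (real \<Rightarrow> bmat) \<Rightarrow> (real \<Rightarrow> bvec) \<Rightarrow> bvec \<Rightarrow> nat \<Rightarrow> real \<Rightarrow> bvec" where
  "picard_iter d N M g v 0 = (\<lambda>s. v)"
| "picard_iter d N M g v (Suc p) = (\<lambda>s n i.
     v n i + integral {0..s} (\<lambda>t. linear_field d N M g t (picard_iter d N M g v p t) n i))"

lemma picard_iter_at_0: "picard_iter d N M g v p 0 n i = v n i"
  by (cases p) auto

lemma continuous_on_linear_field:
  fixes x g :: "real \<Rightarrow> bvec"
  assumes "bmat_continuous d N M" "\<forall>n\<in>{1..N}. \<forall>i<d. continuous_on {0..1} (\<lambda>s. g s n i)"
    and "\<forall>n\<in>{1..N}. \<forall>i<d. continuous_on {0..1} (\<lambda>s. x s n i)"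
    and "n \<in> {1..N}" "i < d"
  shows "continuous_on {0..1} (\<lambda>s. linear_field d N M g s (x s) n i)"
  using assms unfolding linear_field_def bmat_continuous_def
  by (intro continuous_on_add continuous_on_mat_app) auto

lemma picard_iter_Suc_has_vector_derivative:
  assumes M: "bmat_continuous d N M" and g: "\<forall>n\<in>{1..N}. \<forall>i<d. continuous_on {0..1} (\<lambda>s. g s n i)"
    and cont: "\<forall>n\<in>{1..N}. \<forall>i<d. continuous_on {0..1} (\<lambda>s. picard_iter d N M g v p s n i)"
    and "n \<in> {1..N}" "i < d" "s \<in> {0..1}"
  shows "((\<lambda>t. picard_iter d N M g v (Suc p) t n i) has_vector_derivative
           linear_field d N M g s (picard_iter d N M g v p s) n i) (at s within {0..1})"
proof -
  have "((\<lambda>t. integral {0..t} (\<lambda>t. linear_field d N M g t (picard_iter d N M g v p t) n i))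
      has_vector_derivative linear_field d N M g s (picard_iter d N M g v p s) n i) (at s within {0..1})"
    by (intro integral_has_vector_derivative continuous_on_linear_field[OF M g cont] assms(4-6))
  from has_vector_derivative_add[OF has_vector_derivative_const this] show ?thesis by simp
qed

lemma continuous_on_picard_iter:
  assumes M: "bmat_continuous d N M" and g: "\<forall>n\<in>{1..N}. \<forall>i<d. continuous_on {0..1} (\<lambda>s. g s n i)"
  shows "\<forall>n\<in>{1..N}. \<forall>i<d. continuous_on {0..1} (\<lambda>s. picard_iter d N M g v p s n i)"
proof (induction p)
  case (Suc p)
  show ?case
  proof (intro ballI allI impI)
    fix n i assume "n \<in> {1..N}" "i < d"
    then show "continuous_on {0..1} (\<lambda>s. picard_iter d N M g v (Suc p) s n i)"
      using picard_iter_Suc_has_vector_derivative[OF M g Suc]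
      by (intro continuous_on_vector_derivative) blast
  qed
qed simp

lemma picard_increment_bound:
  assumes M: "bmat_continuous d N M" and g: "\<forall>n\<in>{1..N}. \<forall>i<d. continuous_on {0..1} (\<lambda>s. g s n i)"
    and "B \<ge> 0" and B: "\<forall>s\<in>{0..1}. \<forall>n\<in>{1..N}. \<forall>i<d. \<forall>m\<in>{1..N}. \<forall>k<d. norm (M s n i m k) \<le> B"
  obtains K where "K \<ge> 0"
    and "\<And>p s n i. s \<in> {0..1} \<Longrightarrow> n \<in> {1..N} \<Longrightarrow> i < d \<Longrightarrow>
           norm (picard_iter d N M g v (Suc p) s n i - picard_iter d N M g v p s n i)
             \<le> gronwall_majorant K 0 (B * real N * real d + 1) p s"
proof -
  define L where "L = B * real N * real d + 1"
  define D where "D p s n i = picard_iter d N M g v (Suc p) s n i - picard_iter d N M g v p s n i" for p s n i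
  have cont: "\<forall>n\<in>{1..N}. \<forall>i<d. continuous_on {0..1} (\<lambda>s. picard_iter d N M g v p s n i)" for p
    using continuous_on_picard_iter[OF M g] .
  have D': "((\<lambda>t. D (Suc p) t n i) has_vector_derivative mat_app d N (M s) (D p s) n i) (at s within {0..1})"
    if "s \<in> {0..1}" "n \<in> {1..N}" "i < d" for p s n i
    using has_vector_derivative_diff[OF
        picard_iter_Suc_has_vector_derivative[where p="Suc p", OF M g cont that(2,3,1)]
        picard_iter_Suc_has_vector_derivative[where p=p, OF M g cont that(2,3,1)]]
    unfolding D_def linear_field_def by (simp add: mat_app_diff del: picard_iter.simps)
  have "\<forall>n\<in>{1..N}. \<forall>i<d. continuous_on {0..1} (\<lambda>s. D 0 s n i)"
    unfolding D_def using cont by (intro ballI allI impI continuous_on_diff) blast+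
  then obtain K where "K \<ge> 0" and K: "\<forall>s\<in>{0..1}. bnorm d N (D 0 s) \<le> K"
    using bvec_continuous_bounded by blast
  have bound: "\<forall>s\<in>{0..1}. \<forall>n\<in>{1..N}. \<forall>i<d. norm (D p s n i) \<le> gronwall_majorant K 0 L p s" for p
  proof (rule gronwall_majorant_iterate[where D=D and D'="\<lambda>p s. mat_app d N (M s) (D p s)",
        OF \<open>B \<ge> 0\<close> order_refl \<open>K \<ge> 0\<close> L_def K])
    show "\<forall>n\<in>{1..N}. \<forall>i<d. D (Suc p) 0 n i = 0" for p by (simp add: D_def picard_iter_at_0)
    show "\<forall>s\<in>{0..1}. \<forall>n\<in>{1..N}. \<forall>i<d.
        ((\<lambda>t. D (Suc p) t n i) has_vector_derivative mat_app d N (M s) (D p s) n i) (at s within {0..1})" for p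
      using D' by blast
    show "\<forall>s\<in>{0..1}. \<forall>n\<in>{1..N}. \<forall>i<d. norm (mat_app d N (M s) (D p s) n i) \<le> B * bnorm d N (D p s) + 0" for p
      using B by (simp add: norm_mat_app_le)
  qed
  show ?thesis
  proof (rule that[OF \<open>K \<ge> 0\<close>])
    fix p :: nat and s :: real and n i assume "s \<in> {0..1}" "n \<in> {1..N}" "i < d"
    with bound show "norm (picard_iter d N M g v (Suc p) s n i - picard_iter d N M g v p s n i)
        \<le> gronwall_majorant K 0 (B * real N * real d + 1) p s"
      unfolding D_def L_def by blast
  qed
qed

lemma picard_iter_uniform_limit:
  assumes M: "bmat_continuous d N M" and g: "\<forall>n\<in>{1..N}. \<forall>i<d. continuous_on {0..1} (\<lambda>s. g s n i)"
    and n: "n \<in> {1..N}" and i: "i < d"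
  shows "uniform_limit {0..1} (\<lambda>p s. picard_iter d N M g v p s n i)
           (\<lambda>s. v n i + (\<Sum>j. picard_iter d N M g v (Suc j) s n i - picard_iter d N M g v j s n i))
           sequentially"
proof -
  let ?P = "picard_iter d N M g v"
  obtain B where "B \<ge> 0" and B: "\<forall>s\<in>{0..1}. \<forall>n\<in>{1..N}. \<forall>i<d. \<forall>m\<in>{1..N}. \<forall>k<d. norm (M s n i m k) \<le> B"
    using bmat_continuous_bounded[OF M] by blast
  define L where "L = B * real N * real d + 1"
  obtain K where "K \<ge> 0" and K: "\<And>p s n i. s \<in> {0..1} \<Longrightarrow> n \<in> {1..N} \<Longrightarrow> i < d \<Longrightarrow>
      norm (?P (Suc p) s n i - ?P p s n i) \<le> gronwall_majorant K 0 L p s"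
    by (rule picard_increment_bound[OF M g \<open>B \<ge> 0\<close> B, of v, folded L_def]) iprover
  have "norm (?P (Suc p) s n i - ?P p s n i) \<le> K * L ^ p / fact p" if "s \<in> {0..1}" for p s
    using \<open>B \<ge> 0\<close> by (intro order_trans[OF K[OF that n i] gronwall_majorant_0_le[OF \<open>K \<ge> 0\<close> _ that]])
      (simp add: L_def)
  moreover have "summable (\<lambda>p. K * L ^ p / fact p)"
    using summable_mult[OF summable_exp[of L], of K] by (simp add: divide_inverse mult_ac)
  ultimately have "uniform_limit {0..1} (\<lambda>p s. \<Sum>j<p. ?P (Suc j) s n i - ?P j s n i)
      (\<lambda>s. \<Sum>j. ?P (Suc j) s n i - ?P j s n i) sequentially"
    by (intro Weierstrass_m_test) auto
  from uniform_limit_add[OF uniform_limit_const[where c="\<lambda>s. v n i"] this]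
  have "uniform_limit {0..1} (\<lambda>p s. v n i + (\<Sum>j<p. ?P (Suc j) s n i - ?P j s n i))
      (\<lambda>s. v n i + (\<Sum>j. ?P (Suc j) s n i - ?P j s n i)) sequentially" .
  moreover have "v n i + (\<Sum>j<p. ?P (Suc j) s n i - ?P j s n i) = ?P p s n i" for p s
    using sum_lessThan_telescope[of "\<lambda>j. ?P j s n i" p] by (simp del: picard_iter.simps(2))
  ultimately show ?thesis by simp
qed

lemma linear_ivp_exists:
  assumes M: "bmat_continuous d N M" and g: "\<forall>n\<in>{1..N}. \<forall>i<d. continuous_on {0..1} (\<lambda>s. g s n i)"
  shows "\<exists>x. ivp_sol d N (linear_field d N M g) v x"
proof -
  let ?P = "picard_iter d N M g v"
  obtain B where B: "\<forall>s\<in>{0..1}. \<forall>n\<in>{1..N}. \<forall>i<d. \<forall>m\<in>{1..N}. \<forall>k<d. norm (M s n i m k) \<le> B"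
    using bmat_continuous_bounded[OF M] by blast
  define x where "x s n i = v n i + (\<Sum>j. ?P (Suc j) s n i - ?P j s n i)" for s n i
  have lim: "uniform_limit {0..1} (\<lambda>p s. ?P p s n i) (\<lambda>s. x s n i) sequentially"
    if "n \<in> {1..N}" "i < d" for n i
    unfolding x_def using picard_iter_uniform_limit[OF M g that] .
  have "((\<lambda>t. x t n i) has_vector_derivative linear_field d N M g s (x s) n i) (at s within {0..1})"
    if s: "s \<in> {0..1}" and n: "n \<in> {1..N}" and i: "i < d" for s n i
  proof (rule has_vector_derivative_uniform_limit[OF convex_real_interval(5) s])
    show "((\<lambda>t. ?P (Suc p) t n i) has_vector_derivative linear_field d N M g t (?P p t) n i) (at t within {0..1})"
      if "t \<in> {0..1}" for p t
      using picard_iter_Suc_has_vector_derivative[OF M g continuous_on_picard_iter[OF M g] n i that] .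
    show "(\<lambda>p. ?P (Suc p) t n i) \<longlonglongrightarrow> x t n i" if "t \<in> {0..1}" for t
      using tendsto_uniform_limitI[OF lim[OF n i] that] by (rule LIMSEQ_Suc)
    show "uniform_limit {0..1} (\<lambda>p t. linear_field d N M g t (?P p t) n i)
        (\<lambda>t. linear_field d N M g t (x t) n i) sequentially"
      unfolding linear_field_def using B lim n i
      by (intro uniform_limit_add uniform_limit_const uniform_limit_mat_app[where B=B]) auto
  qed
  moreover have "x 0 n i = v n i" for n i
    by (simp add: x_def picard_iter_at_0)
  ultimately show ?thesis unfolding ivp_sol_def by blast
qed

lemma linear_ivp_unique:
  assumes M: "bmat_continuous d N M"
    and x: "ivp_sol d N (linear_field d N M g) v x" and y: "ivp_sol d N (linear_field d N M g) v y"
    and "s \<in> {0..1}" "n \<in> {1..N}" "i < d"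
  shows "x s n i = y s n i"
proof -
  obtain B where "B \<ge> 0" and B: "\<forall>s\<in>{0..1}. \<forall>n\<in>{1..N}. \<forall>i<d. \<forall>m\<in>{1..N}. \<forall>k<d. norm (M s n i m k) \<le> B"
    using bmat_continuous_bounded[OF M] by blast
  define R where "R s n i = x s n i - y s n i" for s n i
  have "norm (R s n i) \<le> 0 * exp (B * real N * real d + 1)"
  proof (rule gronwall[OF \<open>B \<ge> 0\<close> order_refl _ _ _ assms(4-6)])
    show "\<forall>n\<in>{1..N}. \<forall>i<d. R 0 n i = 0" using x y unfolding ivp_sol_def R_def by simp
    show "\<forall>s\<in>{0..1}. \<forall>n\<in>{1..N}. \<forall>i<d.
        ((\<lambda>t. R t n i) has_vector_derivative mat_app d N (M s) (R s) n i) (at s within {0..1})"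
    proof (intro ballI allI impI)
      fix s :: real and n i assume "s \<in> {0..1}" "n \<in> {1..N}" "i < d"
      then have "((\<lambda>t. x t n i - y t n i) has_vector_derivative
          linear_field d N M g s (x s) n i - linear_field d N M g s (y s) n i) (at s within {0..1})"
        using x y unfolding ivp_sol_def by (intro has_vector_derivative_diff) blast+
      then show "((\<lambda>t. R t n i) has_vector_derivative mat_app d N (M s) (R s) n i) (at s within {0..1})"
        unfolding R_def linear_field_def by (simp add: mat_app_diff)
    qed
    show "\<forall>s\<in>{0..1}. \<forall>n\<in>{1..N}. \<forall>i<d. norm (mat_app d N (M s) (R s) n i) \<le> B * bnorm d N (R s) + 0"
      using B by (simp add: norm_mat_app_le)
  qed
  then show ?thesis by (simp add: R_def)
qed

text \<open>Normalised by \<open>0\<close> off \<open>[0,1]\<close> and off the index range exactly as in \<open>char_app\<close>,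
  so that \<open>char_app\<close> unfolds to it.\<close>
definition the_ivp_sol :: "nat \<Rightarrow> nat \<Rightarrow> (real \<Rightarrow> bvec \<Rightarrow> bvec) \<Rightarrow> bvec \<Rightarrow> real \<Rightarrow> bvec" where
  "the_ivp_sol d N F v = (THE q. ivp_sol d N F v q \<and>
     (\<forall>s n i. (s \<notin> {0..1} \<or> n \<notin> {1..N} \<or> d \<le> i) \<longrightarrow> q s n i = 0))"

lemma linear_field_0: "linear_field d N M (\<lambda>_ _ _. 0) = (\<lambda>s x. mat_app d N (M s) x)"
  by (simp add: linear_field_def)

lemma ivp_sol_linear_restrict:
  assumes x: "ivp_sol d N (linear_field d N M g) v x"
  shows "ivp_sol d N (linear_field d N M g) v
           (\<lambda>s n i. if s \<in> {0..1} \<and> n \<in> {1..N} \<and> i < d then x s n i else 0)"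
    (is "ivp_sol d N ?F v ?x0")
  unfolding ivp_sol_def
proof (intro ballI allI impI conjI)
  fix n i assume n: "n \<in> {1..N}" and i: "i < d"
  show "?x0 0 n i = v n i" using x n i unfolding ivp_sol_def by simp
  fix s :: real assume s: "s \<in> {0..1}"
  have "mat_app d N (M s) (?x0 s) n i = mat_app d N (M s) (x s) n i"
    by (rule mat_app_cong) (use s in simp)
  then have eq: "?F s (?x0 s) n i = ?F s (x s) n i" by (simp add: linear_field_def)
  have "((\<lambda>t. x t n i) has_vector_derivative ?F s (x s) n i) (at s within {0..1})"
    using x s n i unfolding ivp_sol_def by blast
  then have "((\<lambda>t. ?x0 t n i) has_vector_derivative ?F s (x s) n i) (at s within {0..1})"
    by (rule has_vector_derivative_transform[OF s, rotated]) (use n i in simp)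
  then show "((\<lambda>t. ?x0 t n i) has_vector_derivative ?F s (?x0 s) n i) (at s within {0..1})"
    unfolding eq .
qed

lemma the_ivp_sol_linear:
  assumes M: "bmat_continuous d N M" and g: "\<forall>n\<in>{1..N}. \<forall>i<d. continuous_on {0..1} (\<lambda>s. g s n i)"
  shows "ivp_sol d N (linear_field d N M g) v (the_ivp_sol d N (linear_field d N M g) v)"
    and "ivp_sol d N (linear_field d N M g) v y \<Longrightarrow> s \<in> {0..1} \<Longrightarrow> n \<in> {1..N} \<Longrightarrow> i < d \<Longrightarrow>
           the_ivp_sol d N (linear_field d N M g) v s n i = y s n i"
proof -
  let ?F = "linear_field d N M g"
  obtain x where x: "ivp_sol d N ?F v x" using linear_ivp_exists[OF M g] by blast
  define x0 where "x0 s n i = (if s \<in> {0..1} \<and> n \<in> {1..N} \<and> i < d then x s n i else 0)" for s n i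
  have x0: "ivp_sol d N ?F v x0"
    unfolding x0_def using ivp_sol_linear_restrict[OF x] .
  have "the_ivp_sol d N ?F v = x0"
    unfolding the_ivp_sol_def
  proof (rule the_equality)
    show "ivp_sol d N ?F v x0 \<and> (\<forall>s n i. (s \<notin> {0..1} \<or> n \<notin> {1..N} \<or> d \<le> i) \<longrightarrow> x0 s n i = 0)"
      using x0 by (auto simp: x0_def)
    fix q assume q: "ivp_sol d N ?F v q \<and> (\<forall>s n i. (s \<notin> {0..1} \<or> n \<notin> {1..N} \<or> d \<le> i) \<longrightarrow> q s n i = 0)"
    show "q = x0"
    proof (intro ext)
      fix s n i
      show "q s n i = x0 s n i"
      proof (cases "s \<in> {0..1} \<and> n \<in> {1..N} \<and> i < d")
        case True
        then show ?thesis using linear_ivp_unique[OF M conjunct1[OF q] x0] by blast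
      next
        case False
        then show ?thesis using q by (auto simp: x0_def not_less)
      qed
    qed
  qed
  with x0 show "ivp_sol d N ?F v (the_ivp_sol d N ?F v)" by simp
  show "the_ivp_sol d N ?F v s n i = y s n i"
    if "ivp_sol d N ?F v y" "s \<in> {0..1}" "n \<in> {1..N}" "i < d"
    using linear_ivp_unique[OF M x0 that] \<open>the_ivp_sol d N ?F v = x0\<close> by simp
qed

section \<open>Differentiable dependence on a parameter\<close>

lemma mat_app_remainder_eq:
  "mat_app d N Mz Qz n i - mat_app d N M\<mu> Q\<mu> n i - c * (mat_app d N M' Q\<mu> n i + mat_app d N M\<mu> P n i)
   = mat_app d N Mz (\<lambda>m k. Qz m k - Q\<mu> m k - c * P m k) n i
     + (mat_app d N (\<lambda>n i m k. Mz n i m k - M\<mu> n i m k - c * M' n i m k) Q\<mu> n i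
        + c * mat_app d N (\<lambda>n i m k. Mz n i m k - M\<mu> n i m k) P n i)"
  unfolding mat_app_def
  by (simp add: algebra_simps sum.distrib sum_subtractf sum_distrib_left)

lemma remainder_forcing_bound:
  assumes est: "\<forall>m\<in>{1..N}. \<forall>k<d. norm (Mz n i m k - M\<mu> n i m k - c * M' n i m k) \<le> e * norm c"
    and M': "\<forall>m\<in>{1..N}. \<forall>k<d. norm (M' n i m k) \<le> B'"
    and "norm c \<le> e" "e \<le> 1" "B' \<ge> 0"
    and "bnorm d N Q \<le> KQ" "bnorm d N P \<le> KP"
  shows "norm (mat_app d N (\<lambda>n i m k. Mz n i m k - M\<mu> n i m k - c * M' n i m k) Q n i
           + c * mat_app d N (\<lambda>n i m k. Mz n i m k - M\<mu> n i m k) P n i)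
         \<le> norm c * e * (KQ + (1 + B') * KP)"
proof -
  have "e \<ge> 0" using \<open>norm c \<le> e\<close> norm_ge_zero order_trans by blast
  have diff: "norm (Mz n i m k - M\<mu> n i m k) \<le> e * (1 + B')" if "m \<in> {1..N}" "k < d" for m k
  proof -
    have "norm (Mz n i m k - M\<mu> n i m k)
        \<le> norm (Mz n i m k - M\<mu> n i m k - c * M' n i m k) + norm c * norm (M' n i m k)"
      using norm_triangle_sub[of "Mz n i m k - M\<mu> n i m k" "c * M' n i m k"] by (simp add: norm_mult)
    also have "\<dots> \<le> e * norm c + e * B'"
      using est M' that \<open>norm c \<le> e\<close> \<open>e \<ge> 0\<close> \<open>B' \<ge> 0\<close> by (intro add_mono mult_mono) auto
    also have "\<dots> \<le> e * 1 + e * B'"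
      using \<open>norm c \<le> e\<close> \<open>e \<le> 1\<close> \<open>e \<ge> 0\<close> by (intro add_right_mono mult_left_mono) auto
    finally show ?thesis by (simp add: algebra_simps)
  qed
  have "norm (mat_app d N (\<lambda>n i m k. Mz n i m k - M\<mu> n i m k - c * M' n i m k) Q n i)
      \<le> e * norm c * bnorm d N Q"
    by (rule norm_mat_app_le) (use est in simp)
  also have "\<dots> \<le> e * norm c * KQ"
    using assms(6) \<open>e \<ge> 0\<close> by (simp add: mult_left_mono)
  finally have first: "norm (mat_app d N (\<lambda>n i m k. Mz n i m k - M\<mu> n i m k - c * M' n i m k) Q n i)
      \<le> e * norm c * KQ" .
  have "norm (mat_app d N (\<lambda>n i m k. Mz n i m k - M\<mu> n i m k) P n i) \<le> e * (1 + B') * bnorm d N P"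
    by (rule norm_mat_app_le) (use diff in simp)
  also have "\<dots> \<le> e * (1 + B') * KP"
    using assms(7) \<open>e \<ge> 0\<close> \<open>B' \<ge> 0\<close> by (simp add: mult_left_mono)
  finally have second: "norm (c * mat_app d N (\<lambda>n i m k. Mz n i m k - M\<mu> n i m k) P n i)
      \<le> norm c * (e * (1 + B') * KP)"
    unfolding norm_mult by (rule mult_left_mono) simp
  show ?thesis
    using norm_triangle_ineq[of "mat_app d N (\<lambda>n i m k. Mz n i m k - M\<mu> n i m k - c * M' n i m k) Q n i"
        "c * mat_app d N (\<lambda>n i m k. Mz n i m k - M\<mu> n i m k) P n i"] first second
    by (simp add: algebra_simps)
qed

lemma ivp_sol_remainder_bound:
  fixes Mz M\<mu> M' :: "real \<Rightarrow> bmat" and Qz Q\<mu> P :: "real \<Rightarrow> bvec"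
  assumes Qz: "ivp_sol d N (\<lambda>s x. mat_app d N (Mz s) x) w Qz"
    and Q\<mu>: "ivp_sol d N (\<lambda>s x. mat_app d N (M\<mu> s) x) w Q\<mu>"
    and P: "ivp_sol d N (\<lambda>s x n i. mat_app d N (M' s) (Q\<mu> s) n i + mat_app d N (M\<mu> s) x n i) (\<lambda>_ _. 0) P"
    and "B \<ge> 0" and Mz: "\<forall>s\<in>{0..1}. \<forall>n\<in>{1..N}. \<forall>i<d. \<forall>m\<in>{1..N}. \<forall>k<d. norm (Mz s n i m k) \<le> B"
    and "B' \<ge> 0" and M': "\<forall>s\<in>{0..1}. \<forall>n\<in>{1..N}. \<forall>i<d. \<forall>m\<in>{1..N}. \<forall>k<d. norm (M' s n i m k) \<le> B'"
    and est: "\<forall>s\<in>{0..1}. \<forall>n\<in>{1..N}. \<forall>i<d. \<forall>m\<in>{1..N}. \<forall>k<d.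
                norm (Mz s n i m k - M\<mu> s n i m k - c * M' s n i m k) \<le> e * norm c"
    and "norm c \<le> e" "e \<le> 1"
    and KQ: "\<forall>s\<in>{0..1}. bnorm d N (Q\<mu> s) \<le> KQ" and KP: "\<forall>s\<in>{0..1}. bnorm d N (P s) \<le> KP"
    and n: "n \<in> {1..N}" and i: "i < d"
  shows "norm (Qz 1 n i - Q\<mu> 1 n i - c * P 1 n i)
           \<le> norm c * e * (KQ + (1 + B') * KP) * exp (B * real N * real d + 1)"
proof -
  define R where "R t n i = Qz t n i - Q\<mu> t n i - c * P t n i" for t n i
  define R' where "R' s n i = mat_app d N (Mz s) (Qz s) n i - mat_app d N (M\<mu> s) (Q\<mu> s) n i
      - c * (mat_app d N (M' s) (Q\<mu> s) n i + mat_app d N (M\<mu> s) (P s) n i)" for s n i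
  have "KQ \<ge> 0" using KQ bnorm_nonneg[of d N "Q\<mu> 0"] by (meson atLeastAtMost_iff order_trans order_refl zero_le_one)
  moreover have "KP \<ge> 0" using KP bnorm_nonneg[of d N "P 0"] by (meson atLeastAtMost_iff order_trans order_refl zero_le_one)
  moreover have "e \<ge> 0" using \<open>norm c \<le> e\<close> norm_ge_zero by (rule order_trans[rotated])
  ultimately have "norm c * e * (KQ + (1 + B') * KP) \<ge> 0"
    using \<open>B' \<ge> 0\<close> by simp
  then have "norm (R 1 n i) \<le> norm c * e * (KQ + (1 + B') * KP) * exp (B * real N * real d + 1)"
  proof (rule gronwall[OF \<open>B \<ge> 0\<close> _ _ _ _ _ n i])
    show "\<forall>n\<in>{1..N}. \<forall>i<d. R 0 n i = 0" using Qz Q\<mu> P unfolding ivp_sol_def R_def by simp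
    show "\<forall>s\<in>{0..1}. \<forall>n\<in>{1..N}. \<forall>i<d.
        ((\<lambda>t. R t n i) has_vector_derivative R' s n i) (at s within {0..1})"
      using Qz Q\<mu> P unfolding ivp_sol_def R_def R'_def
      by (intro ballI allI impI has_vector_derivative_diff has_vector_derivative_mult_right) blast+
    show "\<forall>s\<in>{0..1}. \<forall>n\<in>{1..N}. \<forall>i<d.
        norm (R' s n i) \<le> B * bnorm d N (R s) + norm c * e * (KQ + (1 + B') * KP)"
    proof (intro ballI allI impI)
      fix s :: real and n i assume s: "s \<in> {0..1}" and n: "n \<in> {1..N}" and i: "i < d"
      have "norm (mat_app d N (Mz s) (R s) n i) \<le> B * bnorm d N (R s)"
        by (rule norm_mat_app_le) (use Mz s n i in blast)
      moreover have "norm (mat_app d N (\<lambda>n i m k. Mz s n i m k - M\<mu> s n i m k - c * M' s n i m k) (Q\<mu> s) n i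
          + c * mat_app d N (\<lambda>n i m k. Mz s n i m k - M\<mu> s n i m k) (P s) n i)
          \<le> norm c * e * (KQ + (1 + B') * KP)"
        using est M' s n i KQ KP \<open>norm c \<le> e\<close> \<open>e \<le> 1\<close> \<open>B' \<ge> 0\<close>
        by (intro remainder_forcing_bound) auto
      ultimately show "norm (R' s n i) \<le> B * bnorm d N (R s) + norm c * e * (KQ + (1 + B') * KP)"
        unfolding R'_def mat_app_remainder_eq R_def[symmetric]
        by (rule order_trans[OF norm_triangle_ineq add_mono])
    qed
  qed simp
  then show ?thesis by (simp add: R_def)
qed

lemma ivp_sol_has_field_derivative_parameter:
  fixes M :: "complex \<Rightarrow> real \<Rightarrow> bmat" and M' :: "real \<Rightarrow> bmat"
    and Q :: "complex \<Rightarrow> real \<Rightarrow> bvec" and P :: "real \<Rightarrow> bvec"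
  assumes Q: "\<And>z. ivp_sol d N (\<lambda>s x. mat_app d N (M z s) x) w (Q z)"
    and P: "ivp_sol d N (\<lambda>s x n i. mat_app d N (M' s) (Q \<mu> s) n i + mat_app d N (M \<mu> s) x n i) (\<lambda>_ _. 0) P"
    and "B \<ge> 0"
    and MB: "\<forall>\<^sub>F z in at \<mu>. \<forall>s\<in>{0..1}. \<forall>n\<in>{1..N}. \<forall>i<d. \<forall>m\<in>{1..N}. \<forall>k<d. norm (M z s n i m k) \<le> B"
    and "B' \<ge> 0" and M': "\<forall>s\<in>{0..1}. \<forall>n\<in>{1..N}. \<forall>i<d. \<forall>m\<in>{1..N}. \<forall>k<d. norm (M' s n i m k) \<le> B'"
    and est: "\<And>e. e > 0 \<Longrightarrow> \<forall>\<^sub>F z in at \<mu>. \<forall>s\<in>{0..1}. \<forall>n\<in>{1..N}. \<forall>i<d. \<forall>m\<in>{1..N}. \<forall>k<d.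
                norm (M z s n i m k - M \<mu> s n i m k - (z - \<mu>) * M' s n i m k) \<le> e * norm (z - \<mu>)"
    and n: "n \<in> {1..N}" and i: "i < d"
  shows "((\<lambda>z. Q z 1 n i) has_field_derivative P 1 n i) (at \<mu>)"
proof -
  obtain KQ where "KQ \<ge> 0" and KQ: "\<forall>s\<in>{0..1}. bnorm d N (Q \<mu> s) \<le> KQ"
    using ivp_sol_bnorm_bounded[OF Q] by blast
  obtain KP where "KP \<ge> 0" and KP: "\<forall>s\<in>{0..1}. bnorm d N (P s) \<le> KP"
    using ivp_sol_bnorm_bounded[OF P] by blast
  define C where "C = (KQ + (1 + B') * KP) * exp (B * real N * real d + 1)"
  have "C \<ge> 0" using \<open>KQ \<ge> 0\<close> \<open>KP \<ge> 0\<close> \<open>B' \<ge> 0\<close> by (simp add: C_def)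
  show ?thesis unfolding has_field_derivative_iff
  proof (rule tendstoI)
    fix e :: real assume "e > 0"
    define e' where "e' = min 1 (e / (2 * (C + 1)))"
    have "e' > 0" "e' \<le> 1" using \<open>e > 0\<close> \<open>C \<ge> 0\<close> by (auto simp: e'_def)
    have "e' * C \<le> e / (2 * (C + 1)) * C"
      using \<open>e > 0\<close> \<open>C \<ge> 0\<close> by (intro mult_right_mono) (auto simp: e'_def)
    also have "\<dots> < e"
      using \<open>e > 0\<close> \<open>C \<ge> 0\<close> by (simp add: field_simps add_nonneg_pos)
    finally have "e' * C < e" .
    have "\<forall>\<^sub>F z in at \<mu>. dist z \<mu> < e'" using tendstoD[OF tendsto_ident_at \<open>e' > 0\<close>] .
    moreover have "\<forall>\<^sub>F z in at \<mu>. z \<noteq> \<mu>" by (rule eventually_neq_at_within)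
    ultimately show "\<forall>\<^sub>F z in at \<mu>. dist ((Q z 1 n i - Q \<mu> 1 n i) / (z - \<mu>)) (P 1 n i) < e"
      using MB est[OF \<open>e' > 0\<close>]
    proof eventually_elim
      case (elim z)
      then have "z - \<mu> \<noteq> 0" "norm (z - \<mu>) \<le> e'" by (auto simp: dist_norm)
      have "norm (Q z 1 n i - Q \<mu> 1 n i - (z - \<mu>) * P 1 n i)
          \<le> norm (z - \<mu>) * e' * (KQ + (1 + B') * KP) * exp (B * real N * real d + 1)"
        by (rule ivp_sol_remainder_bound[OF Q Q P \<open>B \<ge> 0\<close> elim(3) \<open>B' \<ge> 0\<close> M' elim(4)
              \<open>norm (z - \<mu>) \<le> e'\<close> \<open>e' \<le> 1\<close> KQ KP n i])
      then have "norm (Q z 1 n i - Q \<mu> 1 n i - (z - \<mu>) * P 1 n i) / norm (z - \<mu>) \<le> e' * C"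
        using \<open>z - \<mu> \<noteq> 0\<close> by (simp add: C_def divide_le_eq mult_ac)
      moreover have "(Q z 1 n i - Q \<mu> 1 n i) / (z - \<mu>) - P 1 n i
          = (Q z 1 n i - Q \<mu> 1 n i - (z - \<mu>) * P 1 n i) / (z - \<mu>)"
        using \<open>z - \<mu> \<noteq> 0\<close> by (simp add: diff_divide_distrib)
      ultimately show ?case
        using \<open>e' * C < e\<close> by (simp add: dist_norm norm_divide)
    qed
  qed
qed

section \<open>The coefficient matrix \<open>A(s, \<mu>)\<close>\<close>

definition Acoef :: "nat \<Rightarrow> real \<Rightarrow> (nat \<Rightarrow> nat) \<Rightarrow> (nat \<Rightarrow> real \<Rightarrow> nat \<Rightarrow> nat \<Rightarrow> real) \<Rightarrow> nat \<Rightarrow> real \<Rightarrow> bmat" where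
  "Acoef N \<Delta> nd Aj j s n i m k = (if bidx N (int n - int (nd j)) = m
       then complex_of_real (Aj j ((s + real n - 1) * \<Delta>) i k) else 0)"

definition Aexp :: "nat \<Rightarrow> (nat \<Rightarrow> nat) \<Rightarrow> nat \<Rightarrow> nat \<Rightarrow> int" where
  "Aexp N nd j n = aidx N (int n - int (nd j))"

definition dAmat :: "nat \<Rightarrow> real \<Rightarrow> nat \<Rightarrow> (nat \<Rightarrow> nat) \<Rightarrow> (nat \<Rightarrow> real \<Rightarrow> nat \<Rightarrow> nat \<Rightarrow> real) \<Rightarrow> complex \<Rightarrow> real \<Rightarrow> bmat" where
  "dAmat N \<Delta> h nd Aj \<mu> s n i m k = complex_of_real \<Delta> *
     (\<Sum>j\<le>h. Acoef N \<Delta> nd Aj j s n i m k * (of_int (Aexp N nd j n) * \<mu> powi (Aexp N nd j n - 1)))"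

lemma Amat_eq_sum: "Amat N \<Delta> h nd Aj s z n i m k =
   complex_of_real \<Delta> * (\<Sum>j\<le>h. Acoef N \<Delta> nd Aj j s n i m k * z powi Aexp N nd j n)"
  unfolding Amat_def Acoef_def Aexp_def by (intro arg_cong[where f="\<lambda>x. complex_of_real \<Delta> * x"] sum.cong) auto

lemma Amat_has_field_derivative:
  assumes "\<mu> \<noteq> 0"
  shows "((\<lambda>z. Amat N \<Delta> h nd Aj s z n i m k) has_field_derivative dAmat N \<Delta> h nd Aj \<mu> s n i m k) (at \<mu>)"
  unfolding Amat_eq_sum dAmat_def using assms by (auto intro!: derivative_eq_intros simp: mult_ac)

lemma smooth_fun_imp_continuous: "smooth_fun f \<Longrightarrow> continuous_on UNIV f"
proof -
  assume "smooth_fun f"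
  then have "f differentiable (at x)" for x unfolding smooth_fun_def by (metis funpow_0)
  then show ?thesis by (intro continuous_at_imp_continuous_on ballI differentiable_imp_continuous_within)
qed

lemma continuous_on_Acoef:
  assumes sm: "\<forall>j\<le>h. \<forall>i<d. \<forall>k<d. smooth_fun (\<lambda>t. Aj j t i k)" and j: "j \<le> h" and i: "i < d" and k: "k < d"
  shows "continuous_on {0..1} (\<lambda>s. Acoef N \<Delta> nd Aj j s n i m k)"
proof (cases "bidx N (int n - int (nd j)) = m")
  case True
  have c: "continuous_on UNIV (\<lambda>t. Aj j t i k)" using sm j i k smooth_fun_imp_continuous by blast
  have "continuous_on {0..1} (\<lambda>s. Aj j ((s + real n - 1) * \<Delta>) i k)"
    by (rule continuous_on_compose2[OF c _ subset_UNIV]) (intro continuous_intros)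
  then show ?thesis using True unfolding Acoef_def by (simp add: continuous_on_of_real)
next
  case False then show ?thesis unfolding Acoef_def by simp
qed

lemma continuous_on_Amat_sum:
  assumes "\<forall>j\<le>h. continuous_on {0..1} (\<lambda>s. Acoef N \<Delta> nd Aj j s n i m k)"
  shows "continuous_on {0..1} (\<lambda>s. complex_of_real \<Delta> * (\<Sum>j\<le>h. Acoef N \<Delta> nd Aj j s n i m k * \<gamma> j))"
  using assms by (intro continuous_intros) auto

lemma bmat_continuous_Amat:
  assumes sm: "\<forall>j\<le>h. \<forall>i<d. \<forall>k<d. smooth_fun (\<lambda>t. Aj j t i k)"
  shows "bmat_continuous d N (\<lambda>s. Amat N \<Delta> h nd Aj s z)"
  unfolding bmat_continuous_def Amat_eq_sum using continuous_on_Acoef[OF sm] by (intro ballI allI impI continuous_on_Amat_sum) auto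

lemma bmat_continuous_dAmat:
  assumes sm: "\<forall>j\<le>h. \<forall>i<d. \<forall>k<d. smooth_fun (\<lambda>t. Aj j t i k)"
  shows "bmat_continuous d N (dAmat N \<Delta> h nd Aj \<mu>)"
  unfolding bmat_continuous_def dAmat_def using continuous_on_Acoef[OF sm] by (intro ballI allI impI continuous_on_Amat_sum) auto

lemma powi_linear_approx:
  fixes \<mu> :: complex
  assumes "\<mu> \<noteq> 0" "e > 0"
  shows "\<forall>\<^sub>F z in at \<mu>. norm (z powi a - \<mu> powi a - (z - \<mu>) * (of_int a * \<mu> powi (a - 1))) \<le> e * norm (z - \<mu>)"
proof -
  have "((\<lambda>z::complex. z powi a) has_field_derivative (of_int a * \<mu> powi (a - 1))) (at \<mu>)"
    using assms(1) by (auto intro!: derivative_eq_intros)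
  then have "((\<lambda>z::complex. z powi a) has_derivative (*) (of_int a * \<mu> powi (a - 1))) (at \<mu>)"
    unfolding has_field_derivative_def .
  then obtain \<delta> where \<delta>: "\<delta> > 0" "\<forall>y. norm (y - \<mu>) < \<delta> \<longrightarrow>
      norm (y powi a - \<mu> powi a - (of_int a * \<mu> powi (a - 1)) * (y - \<mu>)) \<le> e * norm (y - \<mu>)"
    unfolding has_derivative_at_alt using assms(2) by blast
  show ?thesis unfolding eventually_at
    by (rule exI[of _ \<delta>]) (use \<delta> in \<open>auto simp: dist_norm mult.commute\<close>)
qed

lemma Acoef_bounded:
  assumes sm: "\<forall>j\<le>h. \<forall>i<d. \<forall>k<d. smooth_fun (\<lambda>t. Aj j t i k)"
  obtains C where "C \<ge> 0"
    and "\<And>s j n i m k. s \<in> {0..1} \<Longrightarrow> j \<le> h \<Longrightarrow> n \<in> {1..N} \<Longrightarrow> i < d \<Longrightarrow> m \<in> {1..N} \<Longrightarrow> k < d \<Longrightarrow>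
           norm (Acoef N \<Delta> nd Aj j s n i m k) \<le> C"
proof -
  obtain C where "C \<ge> 0" and C: "\<forall>t\<in>{..h} \<times> {1..N} \<times> {..<d} \<times> {1..N} \<times> {..<d}. \<forall>s\<in>{0..1}.
      norm ((\<lambda>(j, n, i, m, k) s. Acoef N \<Delta> nd Aj j s n i m k) t s) \<le> C"
    using continuous_on_Acoef[OF sm] by (atomize_elim, intro finite_family_bounded) auto
  show ?thesis
  proof (rule that[OF \<open>C \<ge> 0\<close>])
    fix s :: real and j n i m k
    assume "s \<in> {0..1}" "j \<le> h" "n \<in> {1..N}" "i < d" "m \<in> {1..N}" "k < d"
    then show "norm (Acoef N \<Delta> nd Aj j s n i m k) \<le> C" using C[rule_format, of "(j, n, i, m, k)" s] by auto
  qed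
qed

lemma Amat_linear_remainder_eq:
  "Amat N \<Delta> h nd Aj s z n i m k - Amat N \<Delta> h nd Aj s \<mu> n i m k - (z - \<mu>) * dAmat N \<Delta> h nd Aj \<mu> s n i m k
   = complex_of_real \<Delta> * (\<Sum>j\<le>h. Acoef N \<Delta> nd Aj j s n i m k *
        (z powi Aexp N nd j n - \<mu> powi Aexp N nd j n - (z - \<mu>) * (of_int (Aexp N nd j n) * \<mu> powi (Aexp N nd j n - 1))))"
  unfolding Amat_eq_sum dAmat_def by (simp add: algebra_simps sum_subtractf sum_distrib_left sum.distrib)

lemma norm_Amat_linear_remainder_le:
  assumes C: "\<And>j. j \<le> h \<Longrightarrow> norm (Acoef N \<Delta> nd Aj j s n i m k) \<le> C" and "C \<ge> 0"
    and r: "\<And>j. j \<le> h \<Longrightarrow> norm (z powi Aexp N nd j n - \<mu> powi Aexp N nd j n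
              - (z - \<mu>) * (of_int (Aexp N nd j n) * \<mu> powi (Aexp N nd j n - 1))) \<le> r"
  shows "norm (Amat N \<Delta> h nd Aj s z n i m k - Amat N \<Delta> h nd Aj s \<mu> n i m k
           - (z - \<mu>) * dAmat N \<Delta> h nd Aj \<mu> s n i m k) \<le> \<bar>\<Delta>\<bar> * (real (Suc h) * (C * r))"
proof -
  have "norm (Amat N \<Delta> h nd Aj s z n i m k - Amat N \<Delta> h nd Aj s \<mu> n i m k
           - (z - \<mu>) * dAmat N \<Delta> h nd Aj \<mu> s n i m k)
      \<le> \<bar>\<Delta>\<bar> * (\<Sum>j\<le>h. C * r)"
    unfolding Amat_linear_remainder_eq norm_mult norm_of_real
    by (intro mult_left_mono order_trans[OF norm_sum] sum_mono)
       (auto simp: norm_mult intro!: mult_mono C r \<open>C \<ge> 0\<close>)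
  then show ?thesis by simp
qed

lemma Amat_linear_approx:
  assumes sm: "\<forall>j\<le>h. \<forall>i<d. \<forall>k<d. smooth_fun (\<lambda>t. Aj j t i k)" and "\<mu> \<noteq> 0" and "e > 0"
  shows "\<forall>\<^sub>F z in at \<mu>. \<forall>s\<in>{0..1}. \<forall>n\<in>{1..N}. \<forall>i<d. \<forall>m\<in>{1..N}. \<forall>k<d.
     norm (Amat N \<Delta> h nd Aj s z n i m k - Amat N \<Delta> h nd Aj s \<mu> n i m k - (z - \<mu>) * dAmat N \<Delta> h nd Aj \<mu> s n i m k)
       \<le> e * norm (z - \<mu>)"
proof -
  obtain C where "C \<ge> 0" and C: "\<And>s j n i m k. s \<in> {0..1} \<Longrightarrow> j \<le> h \<Longrightarrow> n \<in> {1..N} \<Longrightarrow> i < d \<Longrightarrow>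
      m \<in> {1..N} \<Longrightarrow> k < d \<Longrightarrow> norm (Acoef N \<Delta> nd Aj j s n i m k) \<le> C"
    by (rule Acoef_bounded[OF sm]) iprover
  define K where "K = \<bar>\<Delta>\<bar> * real (Suc h) * C"
  have "K \<ge> 0" using \<open>C \<ge> 0\<close> by (simp add: K_def)
  define e' where "e' = e / (K + 1)"
  have "e' > 0" using \<open>e > 0\<close> \<open>K \<ge> 0\<close> by (simp add: e'_def)
  have "K * e' \<le> e"
    using \<open>e > 0\<close> \<open>K \<ge> 0\<close> by (simp add: e'_def field_simps)
  let ?A = "(\<lambda>(j, n). Aexp N nd j n) ` ({..h} \<times> {1..N})"
  have "\<forall>\<^sub>F z in at \<mu>. \<forall>a\<in>?A.
      norm (z powi a - \<mu> powi a - (z - \<mu>) * (of_int a * \<mu> powi (a - 1))) \<le> e' * norm (z - \<mu>)"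
    by (intro eventually_ball_finite finite_imageI ballI powi_linear_approx \<open>\<mu> \<noteq> 0\<close> \<open>e' > 0\<close>) auto
  then show ?thesis
  proof (rule eventually_mono, intro ballI allI impI)
    fix z :: complex and s :: real and n i m k
    assume H: "\<forall>a\<in>?A. norm (z powi a - \<mu> powi a - (z - \<mu>) * (of_int a * \<mu> powi (a - 1))) \<le> e' * norm (z - \<mu>)"
      and "s \<in> {0..1}" "n \<in> {1..N}" "i < d" "m \<in> {1..N}" "k < d"
    then have "norm (Amat N \<Delta> h nd Aj s z n i m k - Amat N \<Delta> h nd Aj s \<mu> n i m k
        - (z - \<mu>) * dAmat N \<Delta> h nd Aj \<mu> s n i m k) \<le> \<bar>\<Delta>\<bar> * (real (Suc h) * (C * (e' * norm (z - \<mu>))))"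
      by (intro norm_Amat_linear_remainder_le \<open>C \<ge> 0\<close> C) (auto intro!: H[rule_format])
    also have "\<dots> = K * e' * norm (z - \<mu>)" by (simp add: K_def mult_ac)
    also have "\<dots> \<le> e * norm (z - \<mu>)" using \<open>K * e' \<le> e\<close> by (intro mult_right_mono) auto
    finally show "norm (Amat N \<Delta> h nd Aj s z n i m k - Amat N \<Delta> h nd Aj s \<mu> n i m k
        - (z - \<mu>) * dAmat N \<Delta> h nd Aj \<mu> s n i m k) \<le> e * norm (z - \<mu>)" .
  qed
qed

lemma Amat_eventually_bounded:
  assumes sm: "\<forall>j\<le>h. \<forall>i<d. \<forall>k<d. smooth_fun (\<lambda>t. Aj j t i k)" and mu: "\<mu> \<noteq> 0"
  shows "\<exists>B\<ge>0. \<forall>\<^sub>F z in at \<mu>. \<forall>s\<in>{0..1}. \<forall>n\<in>{1..N}. \<forall>i<d. \<forall>m\<in>{1..N}. \<forall>k<d. norm (Amat N \<Delta> h nd Aj s z n i m k) \<le> B"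
proof -
  obtain B1 where B1: "B1 \<ge> 0" "\<forall>s\<in>{0..1}. \<forall>n\<in>{1..N}. \<forall>i<d. \<forall>m\<in>{1..N}. \<forall>k<d. norm (Amat N \<Delta> h nd Aj s \<mu> n i m k) \<le> B1"
    using bmat_continuous_bounded[OF bmat_continuous_Amat[OF sm, where N=N and \<Delta>=\<Delta> and nd=nd and z=\<mu>]] by blast
  obtain B2 where B2: "B2 \<ge> 0" "\<forall>s\<in>{0..1}. \<forall>n\<in>{1..N}. \<forall>i<d. \<forall>m\<in>{1..N}. \<forall>k<d. norm (dAmat N \<Delta> h nd Aj \<mu> s n i m k) \<le> B2"
    using bmat_continuous_bounded[OF bmat_continuous_dAmat[OF sm, where N=N and \<Delta>=\<Delta> and nd=nd and \<mu>=\<mu>]] by blast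
  have ev1: "\<forall>\<^sub>F z in at \<mu>. dist z \<mu> < 1" using tendstoD[OF tendsto_ident_at zero_less_one] .
  have tri: "norm x \<le> norm (x - y - w) + norm y + norm w" for x y w :: complex
    using norm_triangle_ineq[of "x - y - w" "y + w"] norm_triangle_ineq[of y w] by simp
  show ?thesis
  proof (rule exI[of _ "1 + B1 + B2"], rule conjI)
    show "0 \<le> 1 + B1 + B2" using B1 B2 by simp
    show "\<forall>\<^sub>F z in at \<mu>. \<forall>s\<in>{0..1}. \<forall>n\<in>{1..N}. \<forall>i<d. \<forall>m\<in>{1..N}. \<forall>k<d. norm (Amat N \<Delta> h nd Aj s z n i m k) \<le> 1 + B1 + B2"
      using Amat_linear_approx[OF sm mu zero_less_one, where N=N and \<Delta>=\<Delta> and nd=nd] ev1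
    proof eventually_elim
      case (elim z)
      show ?case
      proof (intro ballI allI impI)
        fix s :: real and n i m k assume s: "s \<in> {0..1}" and n: "n \<in> {1..N}" and i: "i < d" and m: "m \<in> {1..N}" and k: "k < d"
        have c: "norm (z - \<mu>) \<le> 1" using elim(2) by (simp add: dist_norm)
        have "norm (Amat N \<Delta> h nd Aj s z n i m k) \<le> norm (Amat N \<Delta> h nd Aj s z n i m k - Amat N \<Delta> h nd Aj s \<mu> n i m k - (z - \<mu>) * dAmat N \<Delta> h nd Aj \<mu> s n i m k)
            + norm (Amat N \<Delta> h nd Aj s \<mu> n i m k) + norm ((z - \<mu>) * dAmat N \<Delta> h nd Aj \<mu> s n i m k)"
          by (rule tri)
        also have "\<dots> \<le> 1 * 1 + B1 + 1 * B2"
          using elim(1) B1 B2 s n i m k c unfolding norm_mult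
          by (intro add_mono mult_mono order_trans[OF _ mult_right_mono[OF c]]) auto
        finally show "norm (Amat N \<Delta> h nd Aj s z n i m k) \<le> 1 + B1 + B2" by simp
      qed
    qed
  qed
qed

section \<open>The characteristic matrix\<close>

lemma the_ivp_sol_homogeneous:
  assumes "bmat_continuous d N M"
  shows "ivp_sol d N (\<lambda>s x. mat_app d N (M s) x) v (the_ivp_sol d N (\<lambda>s x. mat_app d N (M s) x) v)"
    and "ivp_sol d N (\<lambda>s x. mat_app d N (M s) x) v y \<Longrightarrow> s \<in> {0..1} \<Longrightarrow> n \<in> {1..N} \<Longrightarrow> i < d \<Longrightarrow>
           the_ivp_sol d N (\<lambda>s x. mat_app d N (M s) x) v s n i = y s n i"
  using the_ivp_sol_linear[OF assms, where g="\<lambda>_ _ _. 0"] unfolding linear_field_0 by auto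

definition unit_bvec :: "nat \<Rightarrow> nat \<Rightarrow> bvec" where
  "unit_bvec m k = (\<lambda>m' k'. if m' = m \<and> k' = k then 1 else 0)"

lemma sum_unit_bvec:
  assumes "n \<in> {1..N}" "i < d"
  shows "(\<Sum>m\<in>{1..N}. \<Sum>k<d. unit_bvec m k n i * w m k) = w n i"
proof -
  have "(\<Sum>m\<in>{1..N}. \<Sum>k<d. unit_bvec m k n i * w m k) = (\<Sum>m\<in>{1..N}. if m = n then w n i else 0)"
    using assms(2) unfolding unit_bvec_def
    by (intro sum.cong) (auto simp: if_distrib[of "\<lambda>x. x * _"] sum.delta cong: if_cong)
  also have "\<dots> = w n i" using assms(1) by simp
  finally show ?thesis .
qed

lemma the_ivp_sol_superposition:
  assumes M: "bmat_continuous d N M" and "s \<in> {0..1}" "n \<in> {1..N}" "i < d"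
  shows "the_ivp_sol d N (\<lambda>s x. mat_app d N (M s) x) w s n i
       = (\<Sum>m\<in>{1..N}. \<Sum>k<d. the_ivp_sol d N (\<lambda>s x. mat_app d N (M s) x) (unit_bvec m k) s n i * w m k)"
proof -
  let ?S = "the_ivp_sol d N (\<lambda>s x. mat_app d N (M s) x)"
  define Y where "Y s n i = (\<Sum>m\<in>{1..N}. \<Sum>k<d. ?S (unit_bvec m k) s n i * w m k)" for s n i
  have "ivp_sol d N (\<lambda>s x. mat_app d N (M s) x) w Y"
    unfolding ivp_sol_def
  proof (intro ballI allI impI conjI)
    fix n i assume n: "n \<in> {1..N}" and i: "i < d"
    have "?S v 0 n i = v n i" for v
      using the_ivp_sol_homogeneous(1)[OF M, of v] n i unfolding ivp_sol_def by blast
    then have "Y 0 n i = (\<Sum>m\<in>{1..N}. \<Sum>k<d. unit_bvec m k n i * w m k)"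
      unfolding Y_def by simp
    then show "Y 0 n i = w n i" using sum_unit_bvec[OF n i] by simp
    fix s :: real assume "s \<in> {0..1}"
    then have "((\<lambda>t. Y t n i) has_vector_derivative
        (\<Sum>m\<in>{1..N}. \<Sum>k<d. mat_app d N (M s) (?S (unit_bvec m k) s) n i * w m k)) (at s within {0..1})"
      using the_ivp_sol_homogeneous(1)[OF M] n i unfolding ivp_sol_def Y_def
      by (intro has_vector_derivative_sum has_vector_derivative_mult_left) blast
    then show "((\<lambda>t. Y t n i) has_vector_derivative mat_app d N (M s) (Y s) n i) (at s within {0..1})"
      unfolding mat_app_sum Y_def .
  qed
  from the_ivp_sol_homogeneous(2)[OF M this assms(2-4)] show ?thesis
    unfolding Y_def .
qed

lemma Bapp_eq_sum:
  assumes "n \<in> {1..N}" "i < d"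
  shows "Bapp N z w n i = (\<Sum>m\<in>{1..N}. \<Sum>k<d. Bapp N z (unit_bvec m k) n i * w m k)"
proof (cases "n < N")
  case True
  then have "n + 1 \<in> {1..N}" by auto
  from sum_unit_bvec[OF this assms(2), of w] True show ?thesis by (simp add: Bapp_def)
next
  case False
  then have "1 \<in> {1..N}" using assms by auto
  from sum_unit_bvec[OF this assms(2), of w] False show ?thesis
    by (simp add: Bapp_def mult.assoc sum_distrib_left[symmetric])
qed

lemma char_app_eq:
  "char_app d N \<Delta> h nd Aj z w n i
     = the_ivp_sol d N (\<lambda>s x. mat_app d N (Amat N \<Delta> h nd Aj s z) x) w 1 n i - Bapp N z w n i"
  unfolding char_app_def the_ivp_sol_def ..

lemma char_mat_eq: "char_mat d N \<Delta> h nd Aj z n i m k = char_app d N \<Delta> h nd Aj z (unit_bvec m k) n i"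
  unfolding char_mat_def unit_bvec_def ..

lemma char_app_eq_mat_app:
  assumes sm: "\<forall>j\<le>h. \<forall>i<d. \<forall>k<d. smooth_fun (\<lambda>t. Aj j t i k)" and n: "n \<in> {1..N}" and i: "i < d"
  shows "char_app d N \<Delta> h nd Aj z w n i = mat_app d N (char_mat d N \<Delta> h nd Aj z) w n i"
proof -
  let ?S = "the_ivp_sol d N (\<lambda>s x. mat_app d N (Amat N \<Delta> h nd Aj s z) x)"
  have "?S w 1 n i = (\<Sum>m\<in>{1..N}. \<Sum>k<d. ?S (unit_bvec m k) 1 n i * w m k)"
    by (rule the_ivp_sol_superposition[OF bmat_continuous_Amat[OF sm] _ n i]) simp
  then have "char_app d N \<Delta> h nd Aj z w n i
      = (\<Sum>m\<in>{1..N}. \<Sum>k<d. ?S (unit_bvec m k) 1 n i * w m k)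
        - (\<Sum>m\<in>{1..N}. \<Sum>k<d. Bapp N z (unit_bvec m k) n i * w m k)"
    unfolding char_app_eq Bapp_eq_sum[OF n i, of z w] by (rule arg_cong[where f="\<lambda>x. x - _"])
  also have "\<dots> = mat_app d N (char_mat d N \<Delta> h nd Aj z) w n i"
    unfolding mat_app_def char_mat_eq char_app_eq by (simp add: left_diff_distrib sum_subtractf)
  finally show ?thesis .
qed

lemma variational_ivp_exists:
  assumes M: "bmat_continuous d N M" and M': "bmat_continuous d N M'" and q: "ivp_sol d N F w q"
  shows "\<exists>P. ivp_sol d N (\<lambda>s x n i. mat_app d N (M' s) (q s) n i + mat_app d N (M s) x n i) (\<lambda>_ _. 0) P"
proof -
  have "continuous_on {0..1} (\<lambda>s. mat_app d N (M' s) (q s) n i)" if "n \<in> {1..N}" "i < d" for n i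
    using M' that unfolding bmat_continuous_def
    by (intro continuous_on_mat_app ballI allI impI ivp_sol_continuous[OF q]) auto
  then have "\<forall>n\<in>{1..N}. \<forall>i<d. continuous_on {0..1} (\<lambda>s. mat_app d N (M' s) (q s) n i)" by blast
  from linear_ivp_exists[where g="\<lambda>s. mat_app d N (M' s) (q s)" and v="\<lambda>_ _. 0", OF M this]
  obtain P where P: "ivp_sol d N (linear_field d N M (\<lambda>s. mat_app d N (M' s) (q s))) (\<lambda>_ _. 0) P" ..
  have "ivp_sol d N (\<lambda>s x n i. mat_app d N (M' s) (q s) n i + mat_app d N (M s) x n i) (\<lambda>_ _. 0) P"
    by (rule ivp_sol_cong_field[OF P]) (simp add: linear_field_def)
  show ?thesis by (rule exI[where x=P]) fact
qed

lemma has_field_derivative_mat_app: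
  assumes "\<And>m k. m \<in> {1..N} \<Longrightarrow> k < d \<Longrightarrow> (\<lambda>z. M z n i m k) field_differentiable (at \<mu>)"
  shows "((\<lambda>z. mat_app d N (M z) v n i) has_field_derivative
           mat_app d N (\<lambda>n i m k. deriv (\<lambda>z. M z n i m k) \<mu>) v n i) (at \<mu>)"
  unfolding mat_app_def
  by (intro DERIV_sum DERIV_cmult_right DERIV_deriv_iff_field_differentiable[THEN iffD2] assms) auto

lemma char_app_has_field_derivative:
  assumes sm: "\<forall>j\<le>h. \<forall>i<d. \<forall>k<d. smooth_fun (\<lambda>t. Aj j t i k)" and "\<mu> \<noteq> 0"
    and q: "ivp_sol d N (\<lambda>s x. mat_app d N (Amat N \<Delta> h nd Aj s \<mu>) x) w q"
    and P: "ivp_sol d N (\<lambda>s x n i. mat_app d N (dAmat N \<Delta> h nd Aj \<mu> s) (q s) n i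
                                  + mat_app d N (Amat N \<Delta> h nd Aj s \<mu>) x n i) (\<lambda>_ _. 0) P"
    and n: "n \<in> {1..N}" and i: "i < d"
  shows "((\<lambda>z. char_app d N \<Delta> h nd Aj z w n i) has_field_derivative P 1 n i - vN N w n i) (at \<mu>)"
proof -
  let ?S = "\<lambda>z. the_ivp_sol d N (\<lambda>s x. mat_app d N (Amat N \<Delta> h nd Aj s z) x) w"
  note S = the_ivp_sol_homogeneous[OF bmat_continuous_Amat[OF sm]]
  have P': "ivp_sol d N (\<lambda>s x n i. mat_app d N (dAmat N \<Delta> h nd Aj \<mu> s) (?S \<mu> s) n i
                               + mat_app d N (Amat N \<Delta> h nd Aj s \<mu>) x n i) (\<lambda>_ _. 0) P"
  proof (rule ivp_sol_cong_field[OF P], intro ballI allI impI)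
    fix s :: real and x n i assume "s \<in> {0..1}" "n \<in> {1..N}" "i < d"
    have "mat_app d N (dAmat N \<Delta> h nd Aj \<mu> s) (q s) n i = mat_app d N (dAmat N \<Delta> h nd Aj \<mu> s) (?S \<mu> s) n i"
      by (rule mat_app_cong) (use S(2)[OF q \<open>s \<in> {0..1}\<close>] in simp)
    then show "mat_app d N (dAmat N \<Delta> h nd Aj \<mu> s) (q s) n i + mat_app d N (Amat N \<Delta> h nd Aj s \<mu>) x n i
        = mat_app d N (dAmat N \<Delta> h nd Aj \<mu> s) (?S \<mu> s) n i + mat_app d N (Amat N \<Delta> h nd Aj s \<mu>) x n i"
      by simp
  qed
  obtain B where "B \<ge> 0" and B: "\<forall>\<^sub>F z in at \<mu>. \<forall>s\<in>{0..1}. \<forall>n\<in>{1..N}. \<forall>i<d. \<forall>m\<in>{1..N}. \<forall>k<d.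
      norm (Amat N \<Delta> h nd Aj s z n i m k) \<le> B"
    using Amat_eventually_bounded[OF sm \<open>\<mu> \<noteq> 0\<close>] by blast
  obtain B' where "B' \<ge> 0" and B': "\<forall>s\<in>{0..1}. \<forall>n\<in>{1..N}. \<forall>i<d. \<forall>m\<in>{1..N}. \<forall>k<d.
      norm (dAmat N \<Delta> h nd Aj \<mu> s n i m k) \<le> B'"
    using bmat_continuous_bounded[OF bmat_continuous_dAmat[OF sm]] by blast
  have "((\<lambda>z. ?S z 1 n i) has_field_derivative P 1 n i) (at \<mu>)"
    by (rule ivp_sol_has_field_derivative_parameter[where M="\<lambda>z s. Amat N \<Delta> h nd Aj s z",
          OF S(1) P' \<open>B \<ge> 0\<close> B \<open>B' \<ge> 0\<close> B' Amat_linear_approx[OF sm \<open>\<mu> \<noteq> 0\<close>] n i])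
  moreover have "((\<lambda>z. Bapp N z w n i) has_field_derivative vN N w n i) (at \<mu>)"
    using n unfolding Bapp_def vN_def by (cases "n < N") (auto intro!: derivative_eq_intros)
  ultimately show ?thesis
    unfolding char_app_eq by (rule DERIV_diff)
qed

lemma char_mat_field_differentiable:
  assumes sm: "\<forall>j\<le>h. \<forall>i<d. \<forall>k<d. smooth_fun (\<lambda>t. Aj j t i k)" and "\<mu> \<noteq> 0"
    and "n \<in> {1..N}" "i < d"
  shows "(\<lambda>z. char_mat d N \<Delta> h nd Aj z n i m k) field_differentiable (at \<mu>)"
proof -
  let ?q = "the_ivp_sol d N (\<lambda>s x. mat_app d N (Amat N \<Delta> h nd Aj s \<mu>) x) (unit_bvec m k)"
  have q: "ivp_sol d N (\<lambda>s x. mat_app d N (Amat N \<Delta> h nd Aj s \<mu>) x) (unit_bvec m k) ?q"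
    by (rule the_ivp_sol_homogeneous(1)[OF bmat_continuous_Amat[OF sm]])
  then obtain P where "ivp_sol d N (\<lambda>s x n i. mat_app d N (dAmat N \<Delta> h nd Aj \<mu> s) (?q s) n i
                                  + mat_app d N (Amat N \<Delta> h nd Aj s \<mu>) x n i) (\<lambda>_ _. 0) P"
    using variational_ivp_exists[OF bmat_continuous_Amat[OF sm] bmat_continuous_dAmat[OF sm]] by blast
  from char_app_has_field_derivative[OF sm \<open>\<mu> \<noteq> 0\<close> q this assms(3,4)] show ?thesis
    unfolding char_mat_eq field_differentiable_def by blast
qed

theorem proposition3p1:
  fixes d N h :: nat and \<Delta> :: real and nd :: "nat \<Rightarrow> nat"
    and Aj :: "nat \<Rightarrow> real \<Rightarrow> nat \<Rightarrow> nat \<Rightarrow> real"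
    and \<mu> :: complex and v :: bvec and q q\<mu> :: "real \<Rightarrow> bvec"
  assumes "d \<ge> 1" and "N \<ge> 1" and "\<Delta> > 0"
    and "nd 0 = 0" and "strict_mono_on {1..h} nd"
    and smooth: "\<forall>j\<le>h. \<forall>i<d. \<forall>k<d. smooth_fun (\<lambda>t. Aj j t i k)"
    and periodic: "\<forall>j\<le>h. \<forall>t. \<forall>i<d. \<forall>k<d. Aj j (t + real N * \<Delta>) i k = Aj j t i k"
    and "\<mu> \<noteq> 0"
    and "\<exists>n\<in>{1..N}. \<exists>i<d. v n i \<noteq> 0"
    and "\<forall>n\<in>{1..N}. \<forall>i<d. mat_app d N (char_mat d N \<Delta> h nd Aj \<mu>) v n i = 0"
    and "ivp_sol d N (\<lambda>s x. mat_app d N (Amat N \<Delta> h nd Aj s \<mu>) x) v q"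
    and "ivp_sol d N
           (\<lambda>s x. \<lambda>n i. mat_app d N (\<lambda>n i m k. deriv (\<lambda>z. Amat N \<Delta> h nd Aj s z n i m k) \<mu>) (q s) n i
                      + mat_app d N (Amat N \<Delta> h nd Aj s \<mu>) x n i)
           (\<lambda>_ _. 0) q\<mu>"
  shows "(\<forall>n\<in>{1..N}. \<forall>i<d. \<forall>m\<in>{1..N}. \<forall>k<d.
            (\<lambda>z. char_mat d N \<Delta> h nd Aj z n i m k) field_differentiable (at \<mu>))
       \<and> (\<forall>n\<in>{1..N}. \<forall>i<d.
            mat_app d N (\<lambda>n i m k. deriv (\<lambda>z. char_mat d N \<Delta> h nd Aj z n i m k) \<mu>) v n i
              = q\<mu> 1 n i - vN N v n i)"
proof -
  have "deriv (\<lambda>z. Amat N \<Delta> h nd Aj s z n i m k) \<mu> = dAmat N \<Delta> h nd Aj \<mu> s n i m k" for s n i m k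
    by (rule DERIV_imp_deriv[OF Amat_has_field_derivative[OF \<open>\<mu> \<noteq> 0\<close>]])
  then have q\<mu>: "ivp_sol d N (\<lambda>s x n i. mat_app d N (dAmat N \<Delta> h nd Aj \<mu> s) (q s) n i
                                  + mat_app d N (Amat N \<Delta> h nd Aj s \<mu>) x n i) (\<lambda>_ _. 0) q\<mu>"
    using assms(12) by simp
  have "mat_app d N (\<lambda>n i m k. deriv (\<lambda>z. char_mat d N \<Delta> h nd Aj z n i m k) \<mu>) v n i = q\<mu> 1 n i - vN N v n i"
    if n: "n \<in> {1..N}" and i: "i < d" for n i
  proof (rule DERIV_unique)
    show "((\<lambda>z. mat_app d N (char_mat d N \<Delta> h nd Aj z) v n i) has_field_derivative
        mat_app d N (\<lambda>n i m k. deriv (\<lambda>z. char_mat d N \<Delta> h nd Aj z n i m k) \<mu>) v n i) (at \<mu>)"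
      by (intro has_field_derivative_mat_app char_mat_field_differentiable[OF smooth \<open>\<mu> \<noteq> 0\<close> n i])
    show "((\<lambda>z. mat_app d N (char_mat d N \<Delta> h nd Aj z) v n i) has_field_derivative q\<mu> 1 n i - vN N v n i) (at \<mu>)"
      using char_app_has_field_derivative[OF smooth \<open>\<mu> \<noteq> 0\<close> assms(11) q\<mu> n i]
      by (simp only: char_app_eq_mat_app[OF smooth n i])
  qed
  with char_mat_field_differentiable[OF smooth \<open>\<mu> \<noteq> 0\<close>] show ?thesis by blast
qed

end
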